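(* Let $d\ge1$, $s_1\ge0$, $s_2\le0$, $\alpha>0$, $\beta>0$, and $g\in L^2(\mathbb{T}^d;\mathbb{C})$; set $\tilde g=g-\frac{1}{|\mathbb{T}^d|}\int_{\mathbb{T}^d}g\,dx$. Consider $$I(u,v)=\frac12\|(-\Delta)^{s_1/2}u\|^2+\frac\alpha2\|u+v-g\|^2+\frac\beta2\|R_{s_2/2}(v)\|^2$$ for $u\in H^{s_1}_0(\mathbb{T}^d;\mathbb{C})$, $v\in\dot H^{s_2}(\mathbb{T}^d;\mathbb{C})\cap L^2_0(\mathbb{T}^d;\mathbb{C})$. Then there exist $\tilde u\in H^{s_1}_0(\mathbb{T}^d;\mathbb{C})$ and $v\in\dot H^{s_2}(\mathbb{T}^d;\mathbb{C})\cap L^2_0(\mathbb{T}^d;\mathbb{C})$ such that $(\tilde u,v)$ minimizes $I$. Moreover, $u:=\tilde u+\frac{1}{|\mathbb{T}^d|}\int_{\mathbb{T}^d}g\,dx$ and $v$ satisfy $$\int_{\mathbb{T}^d}(u(x)-g(x))\,dx=\int_{\mathbb{T}^d}v(x)\,dx=0,$$ and the solution pair $(u,v)$ is unique.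
   Context: $\mathbb{T}^d=\mathbb{R}^d/(2\pi\mathbb{Z})^d$, $\|\cdot\|$ is the $L^2(\mathbb{T}^d;\mathbb{C})$ norm, $L^2_0$ the zero-mean subspace. $\hat u_k=\int_{\mathbb{T}^d}u\,e^{-ik\cdot x}dx$. Fractional Laplacian: $(-\Delta)^\sigma u=(2\pi)^{-d}\sum_{k}|k|^{2\sigma}\hat u_ke^{ik\cdot x}$; Riesz potential for $\sigma\le0$: $R_\sigma(u)=(2\pi)^{-d}\sum_{k\ne0}|k|^{2\sigma}\hat u_ke^{ik\cdot x}$. For $\sigma\ge0$, $H^\sigma_0=\{u\in L^2_0:\sum_{k\ne0}|k|^{2\sigma}|\hat u_k|^2<\infty\}$; for $\sigma<0$, $\dot H^\sigma$ is the completion of $L^2_0$ with respect to the norm $(\sum_{k\ne0}|k|^{2\sigma}|\hat u_k|^2)^{1/2}$. *)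

theory Defs
  imports "HOL-Analysis.Analysis"
begin

text \<open>The torus T^d = R^d/(2 pi Z)^d is represented by the fundamental cube
  [0, 2 pi]^d with Lebesgue measure; functions on T^d are functions on this cube.
  The dimension d is the cardinality of the finite index type 'd (so d >= 1).\<close>

definition torus :: "(real^'d) set" where
  "torus = cbox 0 (\<chi> i. 2 * pi)"

abbreviation torus_measure :: "(real^'d) measure" where
  "torus_measure \<equiv> lebesgue_on torus"

definition L2 :: "(real^'d \<Rightarrow> complex) \<Rightarrow> bool" where
  "L2 u \<longleftrightarrow> u \<in> borel_measurable torus_measure \<and>
     integrable torus_measure (\<lambda>x. (cmod (u x))\<^sup>2)"

definition L2norm2 :: "(real^'d \<Rightarrow> complex) \<Rightarrow> real" where
  "L2norm2 u = (LINT x|torus_measure. (cmod (u x))\<^sup>2)"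

definition lat :: "int^'d \<Rightarrow> real^'d" where
  "lat k = (\<chi> i. of_int (k $ i))"

definition fourier :: "(real^'d \<Rightarrow> complex) \<Rightarrow> int^'d \<Rightarrow> complex" where
  "fourier u k = (LINT x|torus_measure. u x * exp (- \<i> * of_real (lat k \<bullet> x)))"

definition tint :: "(real^'d \<Rightarrow> complex) \<Rightarrow> complex" where
  "tint u = (LINT x|torus_measure. u x)"

definition tvol :: "'d itself \<Rightarrow> real" where
  "tvol _ = (2 * pi) ^ CARD('d)"

definition L2_0 :: "(real^'d \<Rightarrow> complex) set" where
  "L2_0 = {u. L2 u \<and> fourier u 0 = 0}"

text \<open>Weighted coefficient sums sum_{k ~= 0} |k|^{2 sigma} |u_k|^2.
  For sigma >= 0, H0 sigma is H^sigma_0; for sigma < 0, H0 sigma is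
  dot-H^sigma intersected with L^2_0 (elements of L^2_0 whose dot-H^sigma norm is finite).\<close>
definition H0 :: "real \<Rightarrow> (real^'d \<Rightarrow> complex) set" where
  "H0 \<sigma> = {u \<in> L2_0. (\<lambda>k. norm (lat k) powr (2 * \<sigma>) * (cmod (fourier u k))\<^sup>2)
                       summable_on (UNIV - {0})}"

text \<open>Multiplier |k|^{2 sigma} of the fractional Laplacian (with |0|^0 = 1).\<close>
definition lap_mult :: "real \<Rightarrow> int^'d \<Rightarrow> real" where
  "lap_mult \<sigma> k = (if k = 0 then (if \<sigma> = 0 then 1 else 0) else norm (lat k) powr (2 * \<sigma>))"

text \<open>(-Delta)^sigma u: the L^2 function whose Fourier coefficients are |k|^{2 sigma} u_k
  (i.e. the L^2 sum of the defining Fourier series; determined up to a.e. equality).\<close>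
definition frac_lap :: "real \<Rightarrow> (real^'d \<Rightarrow> complex) \<Rightarrow> (real^'d \<Rightarrow> complex)" where
  "frac_lap \<sigma> u = (SOME w. L2 w \<and> (\<forall>k. fourier w k = of_real (lap_mult \<sigma> k) * fourier u k))"

definition riesz :: "real \<Rightarrow> (real^'d \<Rightarrow> complex) \<Rightarrow> (real^'d \<Rightarrow> complex)" where
  "riesz \<sigma> u = (SOME w. L2 w \<and> (\<forall>k. fourier w k =
       (if k = 0 then 0 else of_real (norm (lat k) powr (2 * \<sigma>)) * fourier u k)))"

definition energy :: "real \<Rightarrow> real \<Rightarrow> real \<Rightarrow> real \<Rightarrow> (real^'d \<Rightarrow> complex)
     \<Rightarrow> (real^'d \<Rightarrow> complex) \<Rightarrow> (real^'d \<Rightarrow> complex) \<Rightarrow> real" where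
  "energy s1 s2 \<alpha> \<beta> g u v =
     1/2 * L2norm2 (frac_lap (s1/2) u)
     + \<alpha>/2 * L2norm2 (\<lambda>x. u x + v x - g x)
     + \<beta>/2 * L2norm2 (riesz (s2/2) v)"

end

theory Submission
  imports Defs
begin

text \<open>In Fourier variables the energy decouples: by Parseval,
  \<open>2 |T\<^sup>d| I(u, v)\<close> is the sum over \<open>k\<close> of
  \<open>A\<^sub>k |a|\<^sup>2 + \<alpha> |a + b - \<gamma>\<^sub>k|\<^sup>2 + B\<^sub>k |b|\<^sup>2\<close> with \<open>a = \<hat>u\<^sub>k\<close>, \<open>b = \<hat>v\<^sub>k\<close>,
  \<open>\<gamma>\<^sub>k = \<hat>g\<^sub>k\<close>, \<open>A\<^sub>k = |k|\<^bsup>2 s\<^sub>1\<^esup>\<close> and \<open>B\<^sub>k = \<beta> |k|\<^bsup>2 s\<^sub>2\<^esup>\<close>. For \<open>k \<noteq> 0\<close> this is a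
  positive definite quadratic form in \<open>(a, b)\<close>, shifted by \<open>\<gamma>\<^sub>k\<close>; it is minimised exactly
  at \<open>a = \<alpha> B\<^sub>k \<gamma>\<^sub>k / D\<^sub>k\<close>, \<open>b = \<alpha> A\<^sub>k \<gamma>\<^sub>k / D\<^sub>k\<close> with \<open>D\<^sub>k = A\<^sub>k B\<^sub>k + \<alpha> A\<^sub>k + \<alpha> B\<^sub>k\<close>,
  and the excess over the minimum is the unshifted form evaluated at the deviation.
  These optimal coefficients are square summable with the weights defining the spaces,
  so by Riesz--Fischer they are the Fourier coefficients of a pair \<open>(\<tilde>u, v)\<close>.
  Uniqueness holds because square integrable functions with equal Fourier coefficients
  agree almost everywhere; this in turn follows by approximating indicators of boxes
  with trigonometric polynomials (polynomials in \<open>cos (x\<^sub>i - c\<^sub>i)\<close>) and a Dynkin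
  argument.\<close>

section \<open>Fourier modes on the torus\<close>

definition fourier_mode :: "int^'d \<Rightarrow> real^'d \<Rightarrow> complex" where
  "fourier_mode k x = exp (\<i> * complex_of_real (lat k \<bullet> x))"

lemma compact_torus: "compact torus"
  unfolding torus_def by simp

lemma torus_sets [simp]: "torus \<in> sets lebesgue" "torus \<in> sets borel" "torus \<in> lmeasurable"
  unfolding torus_def by auto

lemma space_torus [simp]: "space (torus_measure :: (real^'d) measure) = torus"
  by (simp add: space_restrict_space)

lemma finite_measure_torus: "finite_measure (torus_measure :: (real^'d) measure)"
  by (simp add: finite_measure_lebesgue_on)

lemma measure_torus: "measure (torus_measure :: (real^'d) measure) torus = tvol TYPE('d)"
proof -
  have coord: "b \<in> Basis \<Longrightarrow> (\<chi> i. 2 * pi) \<bullet> (b::real^'d) = 2 * pi" for b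
    by (auto simp: Basis_vec_def cart_eq_inner_axis[symmetric])
  have "measure (torus_measure :: (real^'d) measure) torus = measure lborel (torus :: (real^'d) set)"
    by (simp add: measure_restrict_space)
  also have "\<dots> = (\<Prod>b\<in>(Basis::(real^'d) set). 2*pi)"
    unfolding torus_def measure_lborel_cbox_eq using coord by (auto intro!: prod.cong)
  also have "\<dots> = (2*pi) ^ CARD('d)"
    by (simp add: power_mult_distrib)
  finally show ?thesis by (simp add: tvol_def)
qed

lemma tvol_pos: "tvol TYPE('d::finite) > 0"
  by (simp add: tvol_def)

lemma integrable_const_torus [simp]:
  "integrable (torus_measure :: (real^'d) measure) (\<lambda>x. c :: 'b::{banach,second_countable_topology})"
  using finite_measure.integrable_const[OF finite_measure_torus] by blast

lemma AE_torus_in_box: "AE x in torus_measure. x \<in> box (0::real^'d) (\<chi> i. 2*pi)"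
proof -
  let ?u = "(\<chi> i. 2*pi) :: real^'d"
  have "emeasure lborel (cbox 0 ?u - box 0 ?u) = emeasure lborel (cbox 0 ?u) - emeasure lborel (box 0 ?u)"
    by (rule emeasure_Diff) (auto simp: box_subset_cbox emeasure_lborel_box_eq)
  also have "\<dots> = 0" by (simp add: emeasure_lborel_box_eq emeasure_lborel_cbox_eq)
  finally have "cbox 0 ?u - box 0 ?u \<in> null_sets lebesgue"
    by (auto simp: null_sets_def intro: null_sets_completionI)
  then have "AE x in lebesgue. x \<in> torus \<longrightarrow> x \<in> box 0 ?u"
    by (rule AE_not_in[THEN eventually_mono]) (auto simp: torus_def)
  then show ?thesis by (subst AE_restrict_space_iff) auto
qed

lemma continuous_imp_measurable_torus:
  "continuous_on UNIV f \<Longrightarrow> f \<in> borel_measurable (torus_measure :: (real^'d) measure)"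
  by (rule continuous_imp_measurable_on_sets_lebesgue) (auto intro: continuous_on_subset)

lemma borel_measurable_cnj [measurable]:
  "f \<in> borel_measurable M \<Longrightarrow> (\<lambda>x. cnj (f x)) \<in> borel_measurable M"
  by (rule measurable_compose[OF _ borel_measurable_continuous_onI[OF continuous_on_cnj[OF continuous_on_id]]])

lemma lat_uminus: "lat (-k) = - lat k"
  unfolding lat_def by (simp add: vec_eq_iff)

lemma lat_add: "lat (k + j) = lat k + lat j"
  unfolding lat_def by (simp add: vec_eq_iff)

lemma lat_0 [simp]: "lat 0 = 0"
  unfolding lat_def by (simp add: vec_eq_iff)

lemma lat_eq_0_iff [simp]: "lat k = 0 \<longleftrightarrow> k = 0"
  unfolding lat_def by (simp add: vec_eq_iff)

lemma norm_lat_ge_1: "k \<noteq> 0 \<Longrightarrow> norm (lat k) \<ge> 1"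
proof -
  assume "k \<noteq> 0"
  then obtain i where i: "k $ i \<noteq> 0" by (auto simp: vec_eq_iff)
  then have "1 \<le> \<bar>real_of_int (k $ i)\<bar>" by linarith
  also have "\<bar>real_of_int (k $ i)\<bar> = \<bar>lat k $ i\<bar>" by (simp add: lat_def)
  also have "\<dots> \<le> norm (lat k)" by (rule component_le_norm_cart)
  finally show ?thesis .
qed

lemma continuous_on_fourier_mode: "continuous_on A (fourier_mode k)"
  unfolding fourier_mode_def by (intro continuous_intros)

lemma fourier_mode_measurable [measurable]: "fourier_mode k \<in> borel_measurable torus_measure"
  by (rule continuous_imp_measurable_torus[OF continuous_on_fourier_mode])

lemma norm_fourier_mode [simp]: "norm (fourier_mode k x) = 1"
  unfolding fourier_mode_def by (simp add: norm_exp_i_times)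

lemma cnj_fourier_mode: "cnj (fourier_mode k x) = fourier_mode (-k) x"
  unfolding fourier_mode_def by (simp add: exp_cnj lat_uminus)

lemma fourier_mode_0 [simp]: "fourier_mode 0 x = 1"
  unfolding fourier_mode_def lat_def by (simp add: inner_vec_def)

lemma fourier_mode_mult: "fourier_mode k x * fourier_mode j x = fourier_mode (k + j) x"
  unfolding fourier_mode_def by (simp add: exp_add[symmetric] lat_add inner_add_left algebra_simps)

lemma fourier_mode_prod: "fourier_mode k x = (\<Prod>i\<in>UNIV. exp ((x $ i) *\<^sub>R (\<i> * of_int (k $ i))))"
proof -
  have "\<i> * complex_of_real (lat k \<bullet> x) = (\<Sum>i\<in>UNIV. (x $ i) *\<^sub>R (\<i> * of_int (k $ i)))"
    by (simp add: lat_def inner_vec_def sum_distrib_left scaleR_conv_of_real algebra_simps)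
  then show ?thesis unfolding fourier_mode_def by (simp add: exp_sum)
qed

lemma fourier_altdef: "fourier u k = (LINT x|torus_measure. u x * cnj (fourier_mode k x))"
  unfolding fourier_def fourier_mode_def by (simp add: exp_cnj)

lemma fourier_0_eq_tint: "fourier u 0 = tint u"
  by (simp add: fourier_altdef tint_def)

lemma lborel_integral_exp_int:
  fixes n :: int
  shows "(\<integral>t. indicator {0..2*pi} t *\<^sub>R exp (t *\<^sub>R (\<i> * of_int n)) \<partial>lborel) = (if n = 0 then 2*pi else 0)"
proof -
  let ?A = "\<i> * (of_int n :: complex)"
  have "set_integrable lborel {0..2*pi} (\<lambda>t. exp (t *\<^sub>R ?A))"
    unfolding set_integrable_def
    by (rule borel_integrable_compact) (auto intro!: continuous_intros)
  then have "(\<integral>t. indicator {0..2*pi} t *\<^sub>R exp (t *\<^sub>R ?A) \<partial>lborel) = integral {0..2*pi} (\<lambda>t. exp (t *\<^sub>R ?A))"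
    using set_borel_integral_eq_integral(2) by (simp add: set_lebesgue_integral_def)
  also have "\<dots> = (if n = 0 then 2*pi else 0)"
  proof (cases "n = 0")
    case True then show ?thesis by (simp add: scaleR_conv_of_real)
  next
    case False
    have "((\<lambda>t. exp (t *\<^sub>R ?A)) has_integral (exp ((2*pi) *\<^sub>R ?A) / ?A - exp (0 *\<^sub>R ?A) / ?A)) {0..2*pi}"
    proof (rule fundamental_theorem_of_calculus)
      fix x assume "x \<in> {0..2*pi}"
      have "((\<lambda>t. exp (t *\<^sub>R ?A) / ?A) has_vector_derivative exp (x *\<^sub>R ?A) * ?A / ?A) (at x within {0..2*pi})"
        unfolding divide_inverse by (intro has_vector_derivative_mult_left exp_scaleR_has_vector_derivative_right)
      then show "((\<lambda>t. exp (t *\<^sub>R ?A) / ?A) has_vector_derivative exp (x *\<^sub>R ?A)) (at x within {0..2*pi})"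
        using False by simp
    qed simp
    moreover have "exp ((2*pi) *\<^sub>R ?A) = 1"
      using exp_integer_2pi[of "of_int n"] by (simp add: scaleR_conv_of_real mult.commute mult.left_commute)
    ultimately show ?thesis using False by (simp add: integral_unique)
  qed
  finally show ?thesis .
qed

lemma integral_lborel_prod_Basis:
  fixes f :: "'a::euclidean_space \<Rightarrow> real \<Rightarrow> complex"
  assumes int: "\<And>b. b \<in> Basis \<Longrightarrow> integrable lborel (f b)"
  shows "(\<integral>x. (\<Prod>b\<in>Basis. f b (x \<bullet> b)) \<partial>lborel) = (\<Prod>b\<in>Basis. \<integral>t. f b t \<partial>lborel)"
proof -
  interpret product_sigma_finite "\<lambda>_::'a. (lborel::real measure)" by standard
  have meas[measurable]: "b \<in> Basis \<Longrightarrow> f b \<in> borel_measurable borel" for b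
    using int[of b] by auto
  have "(\<lambda>x. \<Prod>b\<in>Basis. f b (x \<bullet> b)) \<in> borel_measurable borel"
    by (intro borel_measurable_prod) (auto intro: measurable_compose[OF _ meas])
  then have "(\<integral>x. (\<Prod>b\<in>Basis. f b (x \<bullet> b)) \<partial>lborel)
     = (\<integral>y. (\<Prod>b\<in>Basis. f b ((\<Sum>c\<in>Basis. y c *\<^sub>R c) \<bullet> b)) \<partial>(\<Pi>\<^sub>M b\<in>Basis. lborel))"
    by (subst lborel_eq) (rule integral_distr, measurable)
  also have "\<dots> = (\<integral>y. (\<Prod>b\<in>Basis. f b (y b)) \<partial>(\<Pi>\<^sub>M b\<in>Basis. lborel))"
    by (intro Bochner_Integration.integral_cong prod.cong refl)
       (simp add: inner_sum_left inner_Basis if_distrib cong: if_cong)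
  also have "\<dots> = (\<Prod>b\<in>Basis. \<integral>t. f b t \<partial>lborel)"
    by (rule product_integral_prod) (auto intro: int)
  finally show ?thesis .
qed

lemma integral_lborel_prod_cart:
  fixes f :: "'n::finite \<Rightarrow> real \<Rightarrow> complex"
  assumes int: "\<And>i. integrable lborel (f i)"
  shows "(\<integral>x. (\<Prod>i\<in>UNIV. f i (x $ i)) \<partial>(lborel :: (real^'n) measure)) = (\<Prod>i\<in>UNIV. \<integral>t. f i t \<partial>lborel)"
proof -
  have Basis: "(Basis :: (real^'n) set) = (\<lambda>i. axis i 1) ` UNIV"
    by (auto simp: Basis_vec_def)
  have inj: "inj (\<lambda>i::'n. axis i (1::real))"
    by (auto simp: inj_def axis_eq_axis)
  define g where "g b = f (SOME i. b = axis i 1)" for b :: "real^'n"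
  have g: "g (axis i 1) = f i" for i
    unfolding g_def by (rule arg_cong[where f=f]) (rule some_equality, auto simp: axis_eq_axis)
  have prod_Basis: "(\<Prod>b\<in>(Basis :: (real^'n) set). h b) = (\<Prod>i\<in>UNIV. h (axis i 1))" for h :: "real^'n \<Rightarrow> complex"
    unfolding Basis by (subst prod.reindex[OF inj]) simp
  have "(\<integral>x. (\<Prod>i\<in>UNIV. f i (x $ i)) \<partial>(lborel :: (real^'n) measure)) = (\<integral>x. (\<Prod>b\<in>Basis. g b (x \<bullet> b)) \<partial>lborel)"
    by (simp add: prod_Basis g cart_eq_inner_axis)
  also have "\<dots> = (\<Prod>b\<in>Basis. \<integral>t. g b t \<partial>lborel)"
    by (rule integral_lborel_prod_Basis) (auto simp: Basis g int)
  also have "\<dots> = (\<Prod>i\<in>UNIV. \<integral>t. f i t \<partial>lborel)"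
    by (simp add: prod_Basis g)
  finally show ?thesis .
qed

lemma indicator_torus_prod: "indicator torus x = (\<Prod>i\<in>UNIV. indicator {0..2*pi} (x $ i) :: real)"
proof (cases "x \<in> torus")
  case True
  then have "\<forall>i. x $ i \<in> {0..2*pi}" by (auto simp: torus_def mem_box_cart)
  then show ?thesis using True by simp
next
  case False
  then obtain i where "x $ i \<notin> {0..2*pi}" by (auto simp: torus_def mem_box_cart)
  then have "indicator {0..2*pi} (x $ i) = (0::real)" by simp
  then show ?thesis using False by (auto intro!: prod_zero)
qed

lemma integral_fourier_mode:
  "(LINT x|torus_measure. fourier_mode k x) = (if k = 0 then complex_of_real (tvol TYPE('d)) else 0)"
  for k :: "int^'d"
proof -
  have "(\<lambda>x. indicator torus x *\<^sub>R fourier_mode k x) \<in> borel_measurable (borel :: (real^'d) measure)"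
    using borel_integrable_compact[OF compact_torus continuous_on_fourier_mode[of torus k]] by auto
  then have "(LINT x|torus_measure. fourier_mode k x) = (\<integral>x. indicator torus x *\<^sub>R fourier_mode k x \<partial>lborel)"
    by (simp add: integral_restrict_space integral_completion)
  also have "\<dots> = (\<integral>x. (\<Prod>i\<in>UNIV. indicator {0..2*pi} (x $ i) *\<^sub>R exp ((x $ i) *\<^sub>R (\<i> * of_int (k $ i)))) \<partial>lborel)"
    by (simp add: indicator_torus_prod fourier_mode_prod scaleR_conv_of_real prod.distrib)
  also have "\<dots> = (\<Prod>i\<in>UNIV. \<integral>t. indicator {0..2*pi} t *\<^sub>R exp (t *\<^sub>R (\<i> * of_int (k $ i))) \<partial>lborel)"
    by (rule integral_lborel_prod_cart) (rule borel_integrable_compact, auto intro!: continuous_intros)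
  also have "\<dots> = (\<Prod>i\<in>UNIV. if k $ i = 0 then complex_of_real (2*pi) else 0)"
    by (simp add: lborel_integral_exp_int if_distrib cong: if_cong)
  also have "\<dots> = (if k = 0 then complex_of_real (tvol TYPE('d)) else 0)"
  proof (cases "k = 0")
    case True then show ?thesis by (simp add: tvol_def)
  next
    case False
    then obtain i where "k $ i \<noteq> 0" by (auto simp: vec_eq_iff)
    then show ?thesis using False by (auto intro!: prod_zero bexI[of _ i])
  qed
  finally show ?thesis .
qed

section \<open>Square integrable functions and their inner product\<close>

definition L2_inner :: "(real^'d \<Rightarrow> complex) \<Rightarrow> (real^'d \<Rightarrow> complex) \<Rightarrow> complex" where
  "L2_inner u w = (LINT x|torus_measure. u x * cnj (w x))"

lemma L2_integrable: assumes "L2 u" shows "integrable torus_measure u"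
proof (rule Bochner_Integration.integrable_bound[where f="\<lambda>x. 1 + (cmod (u x))\<^sup>2"])
  show "integrable torus_measure (\<lambda>x. 1 + (cmod (u x))\<^sup>2)"
    using assms by (auto simp: L2_def)
  show "u \<in> borel_measurable torus_measure" using assms by (simp add: L2_def)
  have "cmod z \<le> 1 + (cmod z)\<^sup>2" for z
  proof (cases "cmod z \<le> 1")
    case False then have "cmod z * 1 \<le> cmod z * cmod z" by (intro mult_left_mono) auto
    then show ?thesis by (simp add: power2_eq_square)
  qed (simp add: add_increasing2)
  then show "AE x in torus_measure. norm (u x) \<le> norm (1 + (cmod (u x))\<^sup>2)" by auto
qed

lemma integrable_L2_inner:
  assumes "L2 u" "L2 w" shows "integrable torus_measure (\<lambda>x. u x * cnj (w x))"
proof (rule Bochner_Integration.integrable_bound[where f="\<lambda>x. (cmod (u x))\<^sup>2 + (cmod (w x))\<^sup>2"])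
  show "integrable torus_measure (\<lambda>x. (cmod (u x))\<^sup>2 + (cmod (w x))\<^sup>2)"
    using assms by (auto simp: L2_def)
  have [measurable]: "u \<in> borel_measurable torus_measure" "w \<in> borel_measurable torus_measure"
    using assms by (auto simp: L2_def)
  show "(\<lambda>x. u x * cnj (w x)) \<in> borel_measurable torus_measure" by measurable
  have "cmod a * cmod b \<le> (cmod a)\<^sup>2 + (cmod b)\<^sup>2" for a b :: complex
  proof -
    have "2 * (cmod a * cmod b) \<le> (cmod a)\<^sup>2 + (cmod b)\<^sup>2"
      using sum_squares_bound[of "cmod a" "cmod b"] by (simp add: mult.assoc)
    moreover have "0 \<le> cmod a * cmod b" by simp
    ultimately show ?thesis by linarith
  qed
  then show "AE x in torus_measure. norm (u x * cnj (w x)) \<le> norm ((cmod (u x))\<^sup>2 + (cmod (w x))\<^sup>2)"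
    by (auto simp: norm_mult)
qed

lemma L2_add: assumes "L2 u" "L2 w" shows "L2 (\<lambda>x. u x + w x)"
  unfolding L2_def
proof
  have [measurable]: "u \<in> borel_measurable torus_measure" "w \<in> borel_measurable torus_measure"
    using assms by (auto simp: L2_def)
  show "(\<lambda>x. u x + w x) \<in> borel_measurable torus_measure" by measurable
  show "integrable torus_measure (\<lambda>x. (cmod (u x + w x))\<^sup>2)"
  proof (rule Bochner_Integration.integrable_bound[where f="\<lambda>x. 2 * (cmod (u x))\<^sup>2 + 2 * (cmod (w x))\<^sup>2"])
    show "integrable torus_measure (\<lambda>x. 2 * (cmod (u x))\<^sup>2 + 2 * (cmod (w x))\<^sup>2)"
      using assms by (auto simp: L2_def)
    show "(\<lambda>x. (cmod (u x + w x))\<^sup>2) \<in> borel_measurable torus_measure" by measurable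
    have "(cmod (a + b))\<^sup>2 \<le> 2 * (cmod a)\<^sup>2 + 2 * (cmod b)\<^sup>2" for a b :: complex
    proof -
      have "(cmod (a + b))\<^sup>2 \<le> (cmod a + cmod b)\<^sup>2"
        by (simp add: power_mono norm_triangle_ineq)
      also have "\<dots> \<le> 2 * (cmod a)\<^sup>2 + 2 * (cmod b)\<^sup>2"
        using sum_squares_ge_zero[of "cmod a - cmod b" 0] by (simp add: power2_eq_square algebra_simps)
      finally show ?thesis .
    qed
    then show "AE x in torus_measure. norm ((cmod (u x + w x))\<^sup>2) \<le> norm (2 * (cmod (u x))\<^sup>2 + 2 * (cmod (w x))\<^sup>2)"
      by auto
  qed
qed

lemma L2_cmult: assumes "L2 u" shows "L2 (\<lambda>x. c * u x)"
proof -
  have [measurable]: "u \<in> borel_measurable torus_measure" using assms by (auto simp: L2_def)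
  have "(\<lambda>x. c * u x) \<in> borel_measurable torus_measure" by measurable
  then show ?thesis using assms unfolding L2_def by (simp add: norm_mult power_mult_distrib)
qed

lemma L2_diff: assumes "L2 u" "L2 w" shows "L2 (\<lambda>x. u x - w x)"
  using L2_add[OF assms(1) L2_cmult[OF assms(2), of "-1"]] by simp

lemma L2_bounded:
  assumes "f \<in> borel_measurable torus_measure" "\<And>x. cmod (f x) \<le> B"
  shows "L2 f"
  unfolding L2_def
proof
  show "f \<in> borel_measurable torus_measure" by fact
  show "integrable torus_measure (\<lambda>x. (cmod (f x))\<^sup>2)"
  proof (rule Bochner_Integration.integrable_bound[where f="\<lambda>x. B\<^sup>2"])
    show "(\<lambda>x. (cmod (f x))\<^sup>2) \<in> borel_measurable torus_measure" using assms by simp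
    show "AE x in torus_measure. norm ((cmod (f x))\<^sup>2) \<le> norm (B\<^sup>2)"
      using assms(2) by (auto intro!: power_mono simp: abs_le_square_iff)
  qed simp
qed

lemma L2_fourier_mode: "L2 (fourier_mode k)"
  by (rule L2_bounded[of _ 1]) auto

lemma L2_zero: "L2 (\<lambda>x. 0)"
  by (rule L2_bounded[of _ 0]) auto

lemma L2_sum: "(\<And>k. k \<in> F \<Longrightarrow> L2 (f k)) \<Longrightarrow> L2 (\<lambda>x. \<Sum>k\<in>F. f k x)"
proof (induction F rule: infinite_finite_induct)
  case (insert k F) then show ?case by (simp add: L2_add)
qed (simp_all add: L2_zero)

lemma L2norm2_nonneg: "L2norm2 u \<ge> 0"
  unfolding L2norm2_def by (rule integral_nonneg_AE) auto

lemma L2norm2_eq_0_imp_AE: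
  assumes "L2 u" "L2norm2 u = 0" shows "AE x in torus_measure. u x = 0"
proof -
  have "AE x in torus_measure. (cmod (u x))\<^sup>2 = 0"
    using assms integral_nonneg_eq_0_iff_AE[of torus_measure "\<lambda>x. (cmod (u x))\<^sup>2"]
    by (auto simp: L2_def L2norm2_def)
  then show ?thesis by auto
qed

lemma L2norm2_AE_cong:
  assumes "L2 u" "L2 w" "AE x in torus_measure. u x = w x"
  shows "L2norm2 u = L2norm2 w"
  unfolding L2norm2_def
  by (rule integral_cong_AE) (use assms in \<open>auto simp: L2_def elim: eventually_mono\<close>)

lemma L2norm2_minus_commute: "L2norm2 (\<lambda>x. a x - b x) = L2norm2 (\<lambda>x. b x - a x)"
  unfolding L2norm2_def by (simp add: norm_minus_commute)

lemma L2norm2_fourier_mode: "L2norm2 (fourier_mode k :: real^'d \<Rightarrow> complex) = tvol TYPE('d)"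
  unfolding L2norm2_def using measure_torus[where 'd='d] by simp

lemma fourier_eq_L2_inner: "fourier u k = L2_inner u (fourier_mode k)"
  by (simp add: fourier_altdef L2_inner_def)

lemma L2_inner_fourier_modes:
  "L2_inner (fourier_mode k) (fourier_mode j) = (if k = j then complex_of_real (tvol TYPE('d)) else 0)"
  for k j :: "int^'d"
  unfolding L2_inner_def by (simp add: cnj_fourier_mode fourier_mode_mult integral_fourier_mode)

lemma L2_inner_add_left:
  "L2 u \<Longrightarrow> L2 v \<Longrightarrow> L2 w \<Longrightarrow> L2_inner (\<lambda>x. u x + v x) w = L2_inner u w + L2_inner v w"
  unfolding L2_inner_def by (simp add: distrib_right integrable_L2_inner)

lemma L2_inner_diff_left:
  "L2 u \<Longrightarrow> L2 v \<Longrightarrow> L2 w \<Longrightarrow> L2_inner (\<lambda>x. u x - v x) w = L2_inner u w - L2_inner v w"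
  unfolding L2_inner_def by (simp add: left_diff_distrib integrable_L2_inner)

lemma L2_inner_cmult_left: "L2_inner (\<lambda>x. c * u x) w = c * L2_inner u w"
  unfolding L2_inner_def by (simp add: mult.assoc)

lemma L2_inner_commute: "L2_inner w u = cnj (L2_inner u w)"
proof -
  have "cnj (LINT x|torus_measure. u x * cnj (w x)) = (LINT x|torus_measure. cnj (u x * cnj (w x)))"
    by (rule Bochner_Integration.integral_cnj[symmetric])
  then show ?thesis unfolding L2_inner_def by (simp add: mult.commute)
qed

lemma L2_inner_sum_left:
  "(\<And>k. k \<in> F \<Longrightarrow> L2 (f k)) \<Longrightarrow> L2 w \<Longrightarrow>
     L2_inner (\<lambda>x. \<Sum>k\<in>F. f k x) w = (\<Sum>k\<in>F. L2_inner (f k) w)"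
  unfolding L2_inner_def by (simp add: sum_distrib_right integrable_L2_inner integral_sum)

lemma L2_inner_self: "L2_inner u u = complex_of_real (L2norm2 u)"
  unfolding L2_inner_def L2norm2_def
  by (simp flip: complex_norm_square Bochner_Integration.integral_complex_of_real)

lemma fourier_add: "L2 u \<Longrightarrow> L2 w \<Longrightarrow> fourier (\<lambda>x. u x + w x) k = fourier u k + fourier w k"
  by (simp add: fourier_eq_L2_inner L2_inner_add_left L2_fourier_mode)

lemma fourier_diff: "L2 u \<Longrightarrow> L2 w \<Longrightarrow> fourier (\<lambda>x. u x - w x) k = fourier u k - fourier w k"
  by (simp add: fourier_eq_L2_inner L2_inner_diff_left L2_fourier_mode)

lemma L2norm2_add:
  assumes a: "L2 a" and b: "L2 b"
  shows "L2norm2 (\<lambda>x. a x + b x) = L2norm2 a + L2norm2 b + 2 * Re (L2_inner a b)"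
proof -
  have "complex_of_real (L2norm2 (\<lambda>x. a x + b x)) = L2_inner (\<lambda>x. a x + b x) (\<lambda>x. a x + b x)"
    by (simp add: L2_inner_self)
  also have "\<dots> = L2_inner a (\<lambda>x. a x + b x) + L2_inner b (\<lambda>x. a x + b x)"
    by (rule L2_inner_add_left[OF a b L2_add[OF a b]])
  also have "L2_inner a (\<lambda>x. a x + b x) = cnj (L2_inner a a + L2_inner b a)"
    by (subst L2_inner_commute) (simp add: L2_inner_add_left[OF a b a])
  also have "L2_inner b (\<lambda>x. a x + b x) = cnj (L2_inner a b + L2_inner b b)"
    by (subst L2_inner_commute) (simp add: L2_inner_add_left[OF a b b])
  finally have "complex_of_real (L2norm2 (\<lambda>x. a x + b x))
      = cnj (L2_inner a a) + cnj (L2_inner b b) + (L2_inner a b + cnj (L2_inner a b))"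
    by (simp add: L2_inner_commute[of b a])
  also have "\<dots> = complex_of_real (L2norm2 a + L2norm2 b + 2 * Re (L2_inner a b))"
    by (simp add: L2_inner_self complex_add_cnj)
  finally show ?thesis by (simp only: of_real_eq_iff)
qed

lemma L2norm2_diff:
  assumes a: "L2 a" and b: "L2 b"
  shows "L2norm2 (\<lambda>x. a x - b x) = L2norm2 a + L2norm2 b - 2 * Re (L2_inner a b)"
proof -
  have "L2_inner a (\<lambda>x. - b x) = - L2_inner a b"
    using L2_inner_cmult_left[of "-1" b a] by (subst (1 2) L2_inner_commute) simp
  moreover have "L2norm2 (\<lambda>x. - b x) = L2norm2 b" by (simp add: L2norm2_def)
  ultimately show ?thesis using L2norm2_add[OF a L2_cmult[OF b, of "-1"]] by simp
qed

lemma integral_norm_mult_le_L2: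
  assumes u: "L2 u" and w: "L2 w"
  shows "(LINT x|torus_measure. cmod (u x) * cmod (w x)) \<le> sqrt (L2norm2 u) * sqrt (L2norm2 w)"
proof (cases "L2norm2 u = 0 \<or> L2norm2 w = 0")
  case True
  then have "AE x in torus_measure. cmod (u x) * cmod (w x) = 0"
    using L2norm2_eq_0_imp_AE[OF u] L2norm2_eq_0_imp_AE[OF w] by (auto elim: AE_mp)
  then show ?thesis by (simp add: integral_eq_zero_AE L2norm2_nonneg)
next
  case False
  define a where "a = sqrt (L2norm2 u)"
  define b where "b = sqrt (L2norm2 w)"
  have a: "a > 0" "a\<^sup>2 = L2norm2 u" using False L2norm2_nonneg[of u] by (auto simp: a_def)
  have b: "b > 0" "b\<^sup>2 = L2norm2 w" using False L2norm2_nonneg[of w] by (auto simp: b_def)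
  \<comment> \<open>AM-GM pointwise with the weight \<open>b / a\<close> that makes both sides equal after integration\<close>
  have amgm: "p * q \<le> (b/a)/2 * p\<^sup>2 + a/(2*b) * q\<^sup>2" for p q :: real
  proof -
    have "0 \<le> (b * p - a * q)\<^sup>2 / (2*a*b)" using a b by simp
    also have "\<dots> = (b/a)/2 * p\<^sup>2 + a/(2*b) * q\<^sup>2 - p * q"
      using a b by (simp add: field_simps power2_eq_square)
    finally show ?thesis by simp
  qed
  have "(LINT x|torus_measure. cmod (u x) * cmod (w x))
      \<le> (LINT x|torus_measure. (b/a)/2 * (cmod (u x))\<^sup>2 + a/(2*b) * (cmod (w x))\<^sup>2)"
    using integrable_norm[OF integrable_L2_inner[OF u w]] u w
    by (intro integral_mono amgm) (auto simp: L2_def norm_mult)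
  also have "\<dots> = (b/a)/2 * a\<^sup>2 + a/(2*b) * b\<^sup>2"
    using u w a b by (simp add: L2_def L2norm2_def)
  also have "\<dots> = a * b" using a(1) b(1) by (simp add: field_simps power2_eq_square)
  finally show ?thesis by (simp add: a_def b_def)
qed

lemma L2_inner_Cauchy_Schwarz:
  assumes "L2 u" "L2 w"
  shows "cmod (L2_inner u w) \<le> sqrt (L2norm2 u) * sqrt (L2norm2 w)"
proof -
  have "cmod (L2_inner u w) \<le> (LINT x|torus_measure. cmod (u x * cnj (w x)))"
    unfolding L2_inner_def by (rule integral_norm_bound)
  also have "\<dots> = (LINT x|torus_measure. cmod (u x) * cmod (w x))" by (simp add: norm_mult)
  also have "\<dots> \<le> sqrt (L2norm2 u) * sqrt (L2norm2 w)" by (rule integral_norm_mult_le_L2[OF assms])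
  finally show ?thesis .
qed

lemma integral_norm_le_L2:
  assumes "L2 u"
  shows "(LINT x|torus_measure. cmod (u x)) \<le> sqrt (tvol TYPE('d)) * sqrt (L2norm2 (u :: real^'d \<Rightarrow> complex))"
  using integral_norm_mult_le_L2[OF assms L2_fourier_mode[of 0]]
  by (simp add: L2norm2_fourier_mode mult.commute)

section \<open>Trigonometric sums and Bessel's inequality\<close>

lemma cnj_mult_self: "cnj z * z = complex_of_real ((cmod z)\<^sup>2)"
  by (metis complex_norm_square mult.commute)

definition trig_sum :: "(int^'d) set \<Rightarrow> (int^'d \<Rightarrow> complex) \<Rightarrow> real^'d \<Rightarrow> complex" where
  "trig_sum F a x = (\<Sum>k\<in>F. a k * fourier_mode k x)"

lemma L2_trig_sum: "L2 (trig_sum F a)"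
  unfolding trig_sum_def by (intro L2_sum L2_cmult L2_fourier_mode)

lemma fourier_trig_sum:
  fixes F :: "(int^'d) set"
  assumes "finite F"
  shows "fourier (trig_sum F a) j = (if j \<in> F then a j * complex_of_real (tvol TYPE('d)) else 0)"
proof -
  have "fourier (trig_sum F a) j = (\<Sum>k\<in>F. a k * L2_inner (fourier_mode k) (fourier_mode j))"
    unfolding fourier_eq_L2_inner trig_sum_def
    by (subst L2_inner_sum_left) (auto intro: L2_cmult L2_fourier_mode simp: L2_inner_cmult_left)
  also have "\<dots> = (\<Sum>k\<in>F. if k = j then a j * complex_of_real (tvol TYPE('d)) else 0)"
    by (intro sum.cong) (auto simp: L2_inner_fourier_modes)
  finally show ?thesis
    using assms by (simp add: sum.delta')
qed

lemma L2_inner_trig_sum_right: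
  assumes "L2 w"
  shows "L2_inner w (trig_sum F a) = (\<Sum>k\<in>F. cnj (a k) * fourier w k)"
proof -
  have "L2_inner (trig_sum F a) w = (\<Sum>k\<in>F. a k * L2_inner (fourier_mode k) w)"
    unfolding trig_sum_def
    by (subst L2_inner_sum_left) (auto intro: L2_cmult L2_fourier_mode assms simp: L2_inner_cmult_left)
  then show ?thesis
    by (subst L2_inner_commute) (simp add: fourier_eq_L2_inner L2_inner_commute[of "fourier_mode _" w])
qed

lemma L2norm2_trig_sum:
  fixes F :: "(int^'d) set"
  assumes "finite F"
  shows "L2norm2 (trig_sum F a) = tvol TYPE('d) * (\<Sum>k\<in>F. (cmod (a k))\<^sup>2)"
proof -
  have "complex_of_real (L2norm2 (trig_sum F a)) = (\<Sum>k\<in>F. cnj (a k) * fourier (trig_sum F a) k)"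
    by (simp flip: L2_inner_self add: L2_inner_trig_sum_right[OF L2_trig_sum])
  also have "\<dots> = (\<Sum>k\<in>F. complex_of_real ((cmod (a k))\<^sup>2) * complex_of_real (tvol TYPE('d)))"
    using assms by (intro sum.cong) (auto simp only: fourier_trig_sum if_True cnj_mult_self mult.assoc[symmetric])
  also have "\<dots> = complex_of_real (tvol TYPE('d) * (\<Sum>k\<in>F. (cmod (a k))\<^sup>2))"
    by (simp add: sum_distrib_left mult.commute)
  finally show ?thesis by (simp only: of_real_eq_iff)
qed

lemma L2norm2_trig_sum_normalized:
  fixes c :: "int^'d \<Rightarrow> complex"
  assumes "finite F"
  shows "L2norm2 (trig_sum F (\<lambda>k. c k / of_real (tvol TYPE('d)))) = (\<Sum>k\<in>F. (cmod (c k))\<^sup>2) / tvol TYPE('d)"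
  unfolding L2norm2_trig_sum[OF assms] using tvol_pos[where 'd='d]
  by (simp add: norm_divide power_divide sum_divide_distrib[symmetric] power2_eq_square)

lemma Bessel_inequality:
  fixes u :: "real^'d \<Rightarrow> complex"
  assumes u: "L2 u" and F: "finite F"
  shows "(\<Sum>k\<in>F. (cmod (fourier u k))\<^sup>2) \<le> tvol TYPE('d) * L2norm2 u"
proof -
  define V where "V = tvol TYPE('d)"
  have V: "V > 0" by (simp add: V_def tvol_pos)
  define s where "s = trig_sum F (\<lambda>k. fourier u k / complex_of_real V)"
  define X where "X = (\<Sum>k\<in>F. (cmod (fourier u k))\<^sup>2) / V"
  have s: "L2 s" unfolding s_def by (rule L2_trig_sum)
  have us: "L2_inner u s = complex_of_real X"
  proof -
    have "L2_inner u s = (\<Sum>k\<in>F. cnj (fourier u k / complex_of_real V) * fourier u k)"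
      unfolding s_def by (rule L2_inner_trig_sum_right[OF u])
    also have "\<dots> = (\<Sum>k\<in>F. complex_of_real ((cmod (fourier u k))\<^sup>2 / V))"
    proof (intro sum.cong refl)
      fix k
      have "cnj (fourier u k / complex_of_real V) * fourier u k = (cnj (fourier u k) * fourier u k) / complex_of_real V"
        by simp
      also have "\<dots> = complex_of_real ((cmod (fourier u k))\<^sup>2) / complex_of_real V"
        by (simp only: cnj_mult_self)
      finally show "cnj (fourier u k / complex_of_real V) * fourier u k = complex_of_real ((cmod (fourier u k))\<^sup>2 / V)"
        by (simp only: of_real_divide)
    qed
    finally show ?thesis by (simp add: X_def sum_divide_distrib)
  qed
  have ss: "L2norm2 s = X"
    unfolding s_def X_def V_def by (rule L2norm2_trig_sum_normalized[OF F])
  have "0 \<le> L2norm2 (\<lambda>x. u x - s x)" by (rule L2norm2_nonneg)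
  also have "\<dots> = L2norm2 u - X" using L2norm2_diff[OF u s] us ss by simp
  finally have "X \<le> L2norm2 u" by simp
  then show ?thesis using V by (simp add: X_def V_def[symmetric] divide_le_eq mult.commute)
qed

lemma fourier_sq_summable:
  fixes u :: "real^'d \<Rightarrow> complex"
  assumes "L2 u"
  shows "(\<lambda>k. (cmod (fourier u k))\<^sup>2) summable_on UNIV"
  by (rule nonneg_bdd_above_summable_on)
     (auto intro!: bdd_aboveI[where M="tvol TYPE('d) * L2norm2 u"] Bessel_inequality[OF assms])

definition lattice_cube :: "nat \<Rightarrow> (int^'d) set" where
  "lattice_cube N = {k. \<forall>i. \<bar>k $ i\<bar> \<le> int N}"

lemma finite_lattice_cube: "finite (lattice_cube N :: (int^'d) set)"
proof -
  have "lattice_cube N \<subseteq> (\<lambda>f. vec_lambda f) ` (PiE UNIV (\<lambda>_. {-int N..int N}))"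
  proof
    fix k assume k: "k \<in> lattice_cube N"
    have "k $ i \<in> {-int N..int N}" for i
    proof -
      have "\<bar>k $ i\<bar> \<le> int N" using k by (simp add: lattice_cube_def)
      then show ?thesis by (simp add: abs_le_iff)
    qed
    then have "vec_lambda (\<lambda>i. k $ i) \<in> (\<lambda>f. vec_lambda f) ` (PiE UNIV (\<lambda>_. {-int N..int N}))"
      by (intro imageI) auto
    then show "k \<in> (\<lambda>f. vec_lambda f) ` (PiE UNIV (\<lambda>_. {-int N..int N}))"
      by simp
  qed
  then show ?thesis by (rule finite_subset) (intro finite_imageI finite_PiE, auto)
qed

lemma lattice_cube_mono: "N \<le> N' \<Longrightarrow> lattice_cube N \<subseteq> lattice_cube N'"
proof
  fix k assume "N \<le> N'" "k \<in> lattice_cube N"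
  then have "\<bar>k $ i\<bar> \<le> int N'" for i
    unfolding lattice_cube_def using of_nat_mono[OF \<open>N \<le> N'\<close>] by (auto intro: order_trans)
  then show "k \<in> lattice_cube N'" by (simp add: lattice_cube_def)
qed

lemma mem_lattice_cube: "N \<ge> (\<Sum>i\<in>UNIV. nat \<bar>k $ i\<bar>) \<Longrightarrow> k \<in> lattice_cube N"
proof -
  assume N: "N \<ge> (\<Sum>i\<in>UNIV. nat \<bar>k $ i\<bar>)"
  have "nat \<bar>k $ i\<bar> \<le> N" for i
    using member_le_sum[of i UNIV "\<lambda>i. nat \<bar>k $ i\<bar>"] N by simp
  then have "int (nat \<bar>k $ i\<bar>) \<le> int N" for i
    by (simp only: of_nat_le_iff)
  then show ?thesis unfolding lattice_cube_def by simp
qed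

lemma filterlim_lattice_cube: "filterlim lattice_cube (finite_subsets_at_top UNIV) sequentially"
  unfolding filterlim_def le_filter_def eventually_filtermap
proof (intro allI impI)
  fix P assume "eventually P (finite_subsets_at_top (UNIV :: (int^'d) set))"
  then obtain X where X: "finite X" "\<And>Y. finite Y \<Longrightarrow> X \<subseteq> Y \<Longrightarrow> P Y"
    unfolding eventually_finite_subsets_at_top by auto
  define N0 where "N0 = (\<Sum>k\<in>X. \<Sum>i\<in>UNIV. nat \<bar>k $ i\<bar>)"
  have X_sub: "X \<subseteq> lattice_cube N" if "N \<ge> N0" for N
  proof
    fix k assume "k \<in> X"
    then have "(\<Sum>i\<in>UNIV. nat \<bar>k $ i\<bar>) \<le> N0"
      unfolding N0_def using X(1) by (intro member_le_sum) auto
    then show "k \<in> lattice_cube N" using that by (intro mem_lattice_cube) simp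
  qed
  then show "eventually (\<lambda>N. P (lattice_cube N)) sequentially"
    unfolding eventually_sequentially using X(2) X_sub finite_lattice_cube by blast
qed

lemma has_sum_imp_lattice_cube_tendsto:
  fixes f :: "int^'d \<Rightarrow> 'b::{comm_monoid_add, topological_space}"
  assumes "(f has_sum S) UNIV"
  shows "(\<lambda>N. sum f (lattice_cube N)) \<longlonglongrightarrow> S"
  using filterlim_compose[OF assms[unfolded has_sum_def] filterlim_lattice_cube] by (simp add: o_def)

section \<open>Completeness and the Riesz--Fischer theorem\<close>

lemma L2_Cauchy_imp_L1_Cauchy:
  fixes S :: "nat \<Rightarrow> real^'d \<Rightarrow> complex"
  assumes L2S: "\<And>n. L2 (S n)"
    and cauchy: "\<And>e. e > 0 \<Longrightarrow> \<exists>N. \<forall>n\<ge>N. \<forall>m\<ge>N. L2norm2 (\<lambda>x. S n x - S m x) < e"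
    and e: "e > 0"
  shows "\<exists>N. \<forall>i\<ge>N. \<forall>j\<ge>N. (LINT x|torus_measure. norm (S i x - S j x)) < e"
proof -
  define V where "V = tvol TYPE('d)"
  have V: "V > 0" by (simp add: V_def tvol_pos)
  define e' where "e' = e\<^sup>2 / (V + 1)"
  have e': "e' > 0" using e V by (simp add: e'_def)
  obtain N where N: "\<And>n m. n \<ge> N \<Longrightarrow> m \<ge> N \<Longrightarrow> L2norm2 (\<lambda>x. S n x - S m x) < e'"
    using cauchy[OF e'] by blast
  have "sqrt V * sqrt e' = sqrt (V * e')" by (simp add: real_sqrt_mult)
  also have "\<dots> < sqrt (e\<^sup>2)" using V e by (intro real_sqrt_less_mono) (simp add: e'_def field_simps)
  finally have small: "sqrt V * sqrt e' < e" using e by simp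
  have "(LINT x|torus_measure. norm (S i x - S j x)) \<le> sqrt V * sqrt e'" if "i \<ge> N" "j \<ge> N" for i j
  proof -
    have "(LINT x|torus_measure. norm (S i x - S j x)) \<le> sqrt V * sqrt (L2norm2 (\<lambda>x. S i x - S j x))"
      unfolding V_def by (rule integral_norm_le_L2[OF L2_diff[OF L2S L2S]])
    also have "\<dots> \<le> sqrt V * sqrt e'"
      using N[OF that] V by (intro mult_left_mono real_sqrt_le_mono) auto
    finally show ?thesis .
  qed
  then show ?thesis using small by (meson order_le_less_trans)
qed

text \<open>Fatou's lemma, applied to \<open>|f - T i|\<^sup>2\<close>.\<close>

lemma L2norm2_AE_limit_le:
  assumes f: "L2 f" and T: "\<And>i. L2 (T i)" and w[measurable]: "w \<in> borel_measurable torus_measure"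
    and conv: "AE x in torus_measure. (\<lambda>i. T i x) \<longlonglongrightarrow> w x"
    and bound: "eventually (\<lambda>i. L2norm2 (\<lambda>x. f x - T i x) \<le> e) sequentially"
  shows "L2 (\<lambda>x. f x - w x) \<and> L2norm2 (\<lambda>x. f x - w x) \<le> e"
proof -
  have [measurable]: "f \<in> borel_measurable torus_measure" "T i \<in> borel_measurable torus_measure" for i
    using f T by (auto simp: L2_def)
  have e: "e \<ge> 0"
    using eventually_happens[OF bound] L2norm2_nonneg order_trans by auto
  have "(\<integral>\<^sup>+x. ennreal ((cmod (f x - w x))\<^sup>2) \<partial>torus_measure)
      = (\<integral>\<^sup>+x. liminf (\<lambda>i. ennreal ((cmod (f x - T i x))\<^sup>2)) \<partial>torus_measure)"
  proof (rule nn_integral_cong_AE)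
    show "AE x in torus_measure. ennreal ((cmod (f x - w x))\<^sup>2) = liminf (\<lambda>i. ennreal ((cmod (f x - T i x))\<^sup>2))"
      using conv
    proof eventually_elim
      case (elim x)
      have "(\<lambda>i. ennreal ((cmod (f x - T i x))\<^sup>2)) \<longlonglongrightarrow> ennreal ((cmod (f x - w x))\<^sup>2)"
        by (intro tendsto_intros elim)
      then show ?case by (metis lim_imp_Liminf trivial_limit_sequentially)
    qed
  qed
  also have "\<dots> \<le> liminf (\<lambda>i. \<integral>\<^sup>+x. ennreal ((cmod (f x - T i x))\<^sup>2) \<partial>torus_measure)"
    by (rule nn_integral_liminf) measurable
  also have "\<dots> \<le> ennreal e"
  proof (rule Liminf_le)
    have "(\<integral>\<^sup>+x. ennreal ((cmod (f x - T i x))\<^sup>2) \<partial>torus_measure) = ennreal (L2norm2 (\<lambda>x. f x - T i x))" for i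
      unfolding L2norm2_def
      by (rule nn_integral_eq_integral) (use L2_diff[OF f T] in \<open>auto simp: L2_def\<close>)
    then show "eventually (\<lambda>i. (\<integral>\<^sup>+x. ennreal ((cmod (f x - T i x))\<^sup>2) \<partial>torus_measure) \<le> ennreal e) sequentially"
      using bound by (auto elim!: eventually_mono intro: ennreal_leI)
  qed simp
  finally have bnd: "(\<integral>\<^sup>+x. ennreal ((cmod (f x - w x))\<^sup>2) \<partial>torus_measure) \<le> ennreal e" .
  have "integrable torus_measure (\<lambda>x. (cmod (f x - w x))\<^sup>2)"
    by (rule integrableI_nonneg) (use bnd in \<open>auto simp: top.not_eq_extremum intro: le_less_trans\<close>)
  then have L2: "L2 (\<lambda>x. f x - w x)" unfolding L2_def by simp
  have "L2norm2 (\<lambda>x. f x - w x) = enn2real (\<integral>\<^sup>+x. ennreal ((cmod (f x - w x))\<^sup>2) \<partial>torus_measure)"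
    unfolding L2norm2_def by (rule integral_eq_nn_integral) auto
  also have "\<dots> \<le> e" using bnd e by (intro enn2real_leI) auto
  finally show ?thesis using L2 by simp
qed

lemma L2_Cauchy_convergent:
  fixes S :: "nat \<Rightarrow> real^'d \<Rightarrow> complex"
  assumes L2S: "\<And>n. L2 (S n)"
    and cauchy: "\<And>e. e > 0 \<Longrightarrow> \<exists>N. \<forall>n\<ge>N. \<forall>m\<ge>N. L2norm2 (\<lambda>x. S n x - S m x) < e"
  shows "\<exists>w. L2 w \<and> (\<lambda>n. L2norm2 (\<lambda>x. S n x - w x)) \<longlonglongrightarrow> 0"
proof -
  obtain r where r: "strict_mono r" "AE x in torus_measure. Cauchy (\<lambda>i. S (r i) x)"
    using cauchy_L1_AE_cauchy_subseq[OF L2_integrable[OF L2S] L2_Cauchy_imp_L1_Cauchy[OF L2S cauchy]]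
    by blast
  define w where "w x = lim (\<lambda>i. S (r i) x)" for x
  have [measurable]: "S n \<in> borel_measurable torus_measure" for n
    using L2S[of n] by (simp add: L2_def)
  have w_meas: "w \<in> borel_measurable torus_measure"
    unfolding w_def by (rule borel_measurable_lim_metric) simp
  have conv: "AE x in torus_measure. (\<lambda>i. S (r i) x) \<longlonglongrightarrow> w x"
    using r(2) by eventually_elim (simp add: w_def Cauchy_convergent_iff convergent_LIMSEQ_iff)
  have limit_le: "L2 (\<lambda>x. S n x - w x) \<and> L2norm2 (\<lambda>x. S n x - w x) \<le> e"
    if N: "\<And>n m. n \<ge> N \<Longrightarrow> m \<ge> N \<Longrightarrow> L2norm2 (\<lambda>x. S n x - S m x) < e" and "n \<ge> N" for e N n
  proof (rule L2norm2_AE_limit_le[OF L2S L2S w_meas conv])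
    show "eventually (\<lambda>i. L2norm2 (\<lambda>x. S n x - S (r i) x) \<le> e) sequentially"
      unfolding eventually_sequentially
      using N[OF \<open>n \<ge> N\<close>] seq_suble[OF r(1)] by (meson less_imp_le order_trans)
  qed
  obtain N1 where "\<And>n m. n \<ge> N1 \<Longrightarrow> m \<ge> N1 \<Longrightarrow> L2norm2 (\<lambda>x. S n x - S m x) < 1"
    using cauchy[of 1] by auto
  then have "L2 (\<lambda>x. S N1 x - w x)" using limit_le by blast
  then have "L2 w" using L2_diff[OF L2S[of N1], of "\<lambda>x. S N1 x - w x"] by simp
  moreover have "(\<lambda>n. L2norm2 (\<lambda>x. S n x - w x)) \<longlonglongrightarrow> 0"
  proof (rule LIMSEQ_I)
    fix e :: real assume e: "e > 0"
    obtain N where "\<And>n m. n \<ge> N \<Longrightarrow> m \<ge> N \<Longrightarrow> L2norm2 (\<lambda>x. S n x - S m x) < e/2"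
      using cauchy[of "e/2"] e by auto
    then have "L2norm2 (\<lambda>x. S n x - w x) \<le> e/2" if "n \<ge> N" for n
      using limit_le that by blast
    then have "L2norm2 (\<lambda>x. S n x - w x) < e" if "n \<ge> N" for n
      using that e by fastforce
    then show "\<exists>N. \<forall>n\<ge>N. norm (L2norm2 (\<lambda>x. S n x - w x) - 0) < e"
      by (auto simp: abs_of_nonneg L2norm2_nonneg)
  qed
  ultimately show ?thesis by blast
qed

lemma L2_tendsto_imp_fourier_tendsto:
  assumes S: "\<And>n. L2 (S n)" and w: "L2 w"
    and lim: "(\<lambda>n. L2norm2 (\<lambda>x. S n x - w x)) \<longlonglongrightarrow> 0"
  shows "(\<lambda>n. fourier (S n) k) \<longlonglongrightarrow> fourier w k"
proof -
  have "(\<lambda>n. fourier (S n) k - fourier w k) \<longlonglongrightarrow> 0"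
  proof (rule Lim_null_comparison)
    show "eventually (\<lambda>n. norm (fourier (S n) k - fourier w k)
        \<le> sqrt (L2norm2 (\<lambda>x. S n x - w x)) * sqrt (tvol TYPE('a))) sequentially"
      using L2_inner_Cauchy_Schwarz[OF L2_diff[OF S w] L2_fourier_mode]
      by (simp add: fourier_eq_L2_inner L2_inner_diff_left[OF S w L2_fourier_mode] L2norm2_fourier_mode)
    show "(\<lambda>n. sqrt (L2norm2 (\<lambda>x. S n x - w x)) * sqrt (tvol TYPE('a))) \<longlonglongrightarrow> 0"
      using tendsto_mult_left_zero[OF tendsto_real_sqrt[OF lim, simplified]] by simp
  qed
  then show ?thesis by (simp add: LIM_zero_iff)
qed

lemma L2_tendsto_imp_L2norm2_tendsto:
  assumes S: "\<And>n. L2 (S n)" and w: "L2 w"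
    and lim: "(\<lambda>n. L2norm2 (\<lambda>x. S n x - w x)) \<longlonglongrightarrow> 0"
  shows "(\<lambda>n. L2norm2 (S n)) \<longlonglongrightarrow> L2norm2 w"
proof -
  have eq: "L2norm2 (S n) = L2norm2 w + L2norm2 (\<lambda>x. S n x - w x) + 2 * Re (L2_inner w (\<lambda>x. S n x - w x))" for n
    using L2norm2_add[OF w L2_diff[OF S w]] by simp
  have "(\<lambda>n. Re (L2_inner w (\<lambda>x. S n x - w x))) \<longlonglongrightarrow> 0"
  proof (rule Lim_null_comparison)
    show "eventually (\<lambda>n. norm (Re (L2_inner w (\<lambda>x. S n x - w x)))
        \<le> sqrt (L2norm2 w) * sqrt (L2norm2 (\<lambda>x. S n x - w x))) sequentially"
      using L2_inner_Cauchy_Schwarz[OF w L2_diff[OF S w]] abs_Re_le_cmod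
      by (intro always_eventually allI) (auto intro: order_trans)
    show "(\<lambda>n. sqrt (L2norm2 w) * sqrt (L2norm2 (\<lambda>x. S n x - w x))) \<longlonglongrightarrow> 0"
      using tendsto_mult_right_zero[OF tendsto_real_sqrt[OF lim, simplified]] by simp
  qed
  then have "(\<lambda>n. L2norm2 w + L2norm2 (\<lambda>x. S n x - w x) + 2 * Re (L2_inner w (\<lambda>x. S n x - w x)))
      \<longlonglongrightarrow> L2norm2 w + 0 + 2 * 0"
    by (intro tendsto_intros lim)
  then show ?thesis by (simp add: eq)
qed

text \<open>The squared distances of the partial sums over the cubes \<open>|k\<^sub>i| \<le> N\<close> are tails of
  \<open>\<Sum>|c\<^sub>k|\<^sup>2\<close>.\<close>

lemma trig_sum_lattice_cube_Cauchy:
  fixes c :: "int^'d \<Rightarrow> complex"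
  assumes sq: "(\<lambda>k. (cmod (c k))\<^sup>2) summable_on UNIV" and e: "e > 0"
  defines "S \<equiv> \<lambda>n. trig_sum (lattice_cube n) (\<lambda>k. c k / of_real (tvol TYPE('d)))"
  shows "\<exists>N. \<forall>n\<ge>N. \<forall>m\<ge>N. L2norm2 (\<lambda>x. S n x - S m x) < e"
proof -
  define V where "V = tvol TYPE('d)"
  have V: "V > 0" by (simp add: V_def tvol_pos)
  define T where "T n = (\<Sum>k\<in>lattice_cube n. (cmod (c k))\<^sup>2)" for n
  have T_lim: "T \<longlonglongrightarrow> infsum (\<lambda>k. (cmod (c k))\<^sup>2) UNIV"
    unfolding T_def by (rule has_sum_imp_lattice_cube_tendsto) (use sq in simp)
  obtain N where N: "\<And>m n. m \<ge> N \<Longrightarrow> n \<ge> N \<Longrightarrow> norm (T m - T n) < e * V"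
    using CauchyD[OF LIMSEQ_imp_Cauchy[OF T_lim], of "e * V"] e V by auto
  have diff: "L2norm2 (\<lambda>x. S n x - S m x) = (T n - T m) / V" if "m \<le> n" for m n
  proof -
    have sub: "lattice_cube m \<subseteq> lattice_cube n" by (rule lattice_cube_mono[OF that])
    have "(\<lambda>x. S n x - S m x) = trig_sum (lattice_cube n - lattice_cube m) (\<lambda>k. c k / of_real V)"
      unfolding S_def trig_sum_def V_def by (rule ext) (simp add: sum_diff[OF finite_lattice_cube sub])
    then show ?thesis
      by (simp add: V_def L2norm2_trig_sum_normalized finite_lattice_cube T_def
          sum_diff[OF finite_lattice_cube sub])
  qed
  have "L2norm2 (\<lambda>x. S n x - S m x) < e" if "n \<ge> N" "m \<ge> N" for n m
  proof (cases "m \<le> n")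
    case True
    then show ?thesis using N[OF that] V by (simp add: diff pos_divide_less_eq)
  next
    case False
    then show ?thesis using N[OF that(2,1)] V
      by (subst L2norm2_minus_commute) (simp add: diff pos_divide_less_eq)
  qed
  then show ?thesis by blast
qed

theorem Riesz_Fischer:
  fixes c :: "int^'d \<Rightarrow> complex"
  assumes sq: "(\<lambda>k. (cmod (c k))\<^sup>2) summable_on UNIV"
  shows "\<exists>w. L2 w \<and> (\<forall>k. fourier w k = c k) \<and>
            ((\<lambda>k. (cmod (c k))\<^sup>2) has_sum (tvol TYPE('d) * L2norm2 w)) UNIV"
proof -
  define V where "V = tvol TYPE('d)"
  have V: "V > 0" by (simp add: V_def tvol_pos)
  define S where "S n = trig_sum (lattice_cube n) (\<lambda>k. c k / of_real V)" for n
  have L2S: "L2 (S n)" for n unfolding S_def by (rule L2_trig_sum)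
  have "\<exists>N. \<forall>n\<ge>N. \<forall>m\<ge>N. L2norm2 (\<lambda>x. S n x - S m x) < e" if "e > 0" for e
    using trig_sum_lattice_cube_Cauchy[OF sq that] unfolding S_def V_def .
  then obtain w where w: "L2 w" "(\<lambda>n. L2norm2 (\<lambda>x. S n x - w x)) \<longlonglongrightarrow> 0"
    using L2_Cauchy_convergent[of S, OF L2S] by blast
  have "fourier w k = c k" for k
  proof -
    have "eventually (\<lambda>n. fourier (S n) k = c k) sequentially"
      unfolding eventually_sequentially S_def using V
      by (auto intro!: exI mem_lattice_cube simp: fourier_trig_sum finite_lattice_cube V_def)
    then have "(\<lambda>n. fourier (S n) k) \<longlonglongrightarrow> c k" by (rule tendsto_eventually)
    then show ?thesis
      using L2_tendsto_imp_fourier_tendsto[OF L2S w] LIMSEQ_unique by blast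
  qed
  moreover have "L2norm2 w = infsum (\<lambda>k. (cmod (c k))\<^sup>2) UNIV / V"
  proof -
    have "(\<lambda>n. L2norm2 (S n)) \<longlonglongrightarrow> infsum (\<lambda>k. (cmod (c k))\<^sup>2) UNIV / V"
      unfolding S_def V_def L2norm2_trig_sum_normalized[OF finite_lattice_cube]
      using sq tvol_pos[where 'd='d] by (intro tendsto_intros has_sum_imp_lattice_cube_tendsto) simp_all
    then show ?thesis
      using L2_tendsto_imp_L2norm2_tendsto[OF L2S w] LIMSEQ_unique by blast
  qed
  ultimately show ?thesis
    using w(1) sq V by (auto simp: V_def)
qed

section \<open>Uniqueness of Fourier coefficients\<close>

inductive_set trig_poly :: "(real^'d \<Rightarrow> complex) set" where
  mode: "fourier_mode k \<in> trig_poly"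
| cmult: "h \<in> trig_poly \<Longrightarrow> (\<lambda>x. c * h x) \<in> trig_poly"
| add: "h \<in> trig_poly \<Longrightarrow> g \<in> trig_poly \<Longrightarrow> (\<lambda>x. h x + g x) \<in> trig_poly"

lemma trig_poly_const: "(\<lambda>x. c) \<in> trig_poly"
  using trig_poly.cmult[OF trig_poly.mode[of 0], of c] by simp

lemma trig_poly_mult_mode: "g \<in> trig_poly \<Longrightarrow> (\<lambda>x. fourier_mode k x * g x) \<in> trig_poly"
proof (induction g rule: trig_poly.induct)
  case (mode j) then show ?case by (simp add: fourier_mode_mult trig_poly.mode)
next
  case (cmult h c)
  have "(\<lambda>x. fourier_mode k x * (c * h x)) = (\<lambda>x. c * (fourier_mode k x * h x))" by (simp add: algebra_simps)
  then show ?case using trig_poly.cmult[OF cmult.IH] by simp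
next
  case (add h g)
  have "(\<lambda>x. fourier_mode k x * (h x + g x)) = (\<lambda>x. fourier_mode k x * h x + fourier_mode k x * g x)" by (simp add: algebra_simps)
  then show ?case using trig_poly.add[OF add.IH] by simp
qed

lemma trig_poly_mult: "h \<in> trig_poly \<Longrightarrow> g \<in> trig_poly \<Longrightarrow> (\<lambda>x. h x * g x) \<in> trig_poly"
proof (induction h rule: trig_poly.induct)
  case (mode k) then show ?case by (rule trig_poly_mult_mode)
next
  case (cmult h c)
  have "(\<lambda>x. c * h x * g x) = (\<lambda>x. c * (h x * g x))" by (simp add: algebra_simps)
  then show ?case using trig_poly.cmult[OF cmult.IH[OF cmult.prems]] by simp
next
  case (add h1 h2)
  have "(\<lambda>x. (h1 x + h2 x) * g x) = (\<lambda>x. h1 x * g x + h2 x * g x)" by (simp add: algebra_simps)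
  then show ?case using trig_poly.add[OF add.IH(1)[OF add.prems] add.IH(2)[OF add.prems]] by simp
qed

lemma trig_poly_prod: "finite I \<Longrightarrow> (\<And>i. i \<in> I \<Longrightarrow> h i \<in> trig_poly) \<Longrightarrow> (\<lambda>x. \<Prod>i\<in>I. h i x) \<in> trig_poly"
proof (induction I rule: finite_induct)
  case empty then show ?case by (simp add: trig_poly_const)
next
  case (insert i I) then show ?case by (simp add: trig_poly_mult)
qed

lemma continuous_on_trig_poly: "h \<in> trig_poly \<Longrightarrow> continuous_on UNIV h"
  by (induction h rule: trig_poly.induct) (auto intro!: continuous_intros continuous_on_fourier_mode)

lemma fourier_mode_axis: "fourier_mode (axis i 1) x = exp (\<i> * complex_of_real (x $ i))"
proof -
  have "lat (axis i (1::int)) = axis i 1"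
    by (simp add: lat_def axis_def vec_eq_iff)
  then have "lat (axis i (1::int)) \<bullet> x = x $ i"
    by (simp add: inner_axis')
  then show ?thesis by (simp add: fourier_mode_def)
qed

lemma trig_poly_cos: "(\<lambda>x. complex_of_real (cos (x $ i - c))) \<in> trig_poly"
proof -
  have "complex_of_real (cos (x $ i - c)) =
        (exp (- (\<i> * of_real c)) / 2) * fourier_mode (axis i 1) x + (exp (\<i> * of_real c) / 2) * fourier_mode (- axis i 1) x" for x
  proof -
    have "complex_of_real (cos (x $ i - c)) = cos (complex_of_real (x $ i - c))"
      by (metis cos_of_real)
    also have "\<dots> = (exp (\<i> * complex_of_real (x $ i - c)) + exp (- (\<i> * complex_of_real (x $ i - c)))) / 2"
      by (rule cos_exp_eq)
    also have "\<dots> = (exp (- (\<i> * of_real c)) / 2) * exp (\<i> * complex_of_real (x $ i))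
                    + (exp (\<i> * of_real c) / 2) * exp (- (\<i> * complex_of_real (x $ i)))"
      by (simp add: algebra_simps exp_add[symmetric] exp_diff[symmetric] add_divide_distrib)
    also have "\<dots> = (exp (- (\<i> * of_real c)) / 2) * fourier_mode (axis i 1) x + (exp (\<i> * of_real c) / 2) * fourier_mode (- axis i 1) x"
      by (simp add: fourier_mode_axis cnj_fourier_mode[symmetric] exp_cnj)
    finally show ?thesis .
  qed
  then have eq: "(\<lambda>x. complex_of_real (cos (x $ i - c))) =
      (\<lambda>x. (exp (- (\<i> * of_real c)) / 2) * fourier_mode (axis i 1) x + (exp (\<i> * of_real c) / 2) * fourier_mode (- axis i 1) x)"
    by (rule ext)
  show ?thesis unfolding eq by (intro trig_poly.add trig_poly.cmult trig_poly.mode)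
qed

lemma trig_poly_polynomial_cos:
  assumes "real_polynomial_function p"
  shows "(\<lambda>x. complex_of_real (p (cos (x $ i - c)))) \<in> trig_poly"
  using assms
proof (induction p rule: real_polynomial_function.induct)
  case (linear f)
  then obtain a where "f = (\<lambda>x. x * a)" using real_bounded_linear by blast
  then have "(\<lambda>x. complex_of_real (f (cos (x $ i - c)))) = (\<lambda>x. complex_of_real a * complex_of_real (cos (x $ i - c)))"
    by (simp add: mult.commute)
  then show ?case using trig_poly.cmult[OF trig_poly_cos] by simp
next
  case (const c) then show ?case by (simp add: trig_poly_const)
next
  case (add f g) then show ?case by (simp add: trig_poly.add)
next
  case (mult f g) then show ?case by (simp add: trig_poly_mult)
qed

lemma integrable_mult_continuous:
  assumes f: "integrable torus_measure f" and h: "continuous_on UNIV h"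
  shows "integrable torus_measure (\<lambda>x. f x * h x :: complex)"
proof -
  obtain B where B: "\<And>x. x \<in> torus \<Longrightarrow> norm (h x) \<le> B"
    using compact_imp_bounded[OF compact_continuous_image[OF continuous_on_subset[OF h] compact_torus]]
    by (auto simp: bounded_iff)
  show ?thesis
  proof (rule Bochner_Integration.integrable_bound[where f="\<lambda>x. B * f x"])
    show "integrable torus_measure (\<lambda>x. B * f x)" using f by simp
    have [measurable]: "h \<in> borel_measurable torus_measure" by (rule continuous_imp_measurable_torus[OF h])
    have [measurable]: "f \<in> borel_measurable torus_measure" using f by auto
    show "(\<lambda>x. f x * h x) \<in> borel_measurable torus_measure" by measurable
    have "norm (f x * h x) \<le> norm (B * f x)" if "x \<in> torus" for x
    proof -
      have "B \<ge> 0" using B[OF that] norm_ge_zero order_trans by blast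
      then show ?thesis using mult_left_mono[OF B[OF that] norm_ge_zero[of "f x"]]
        by (simp add: norm_mult mult.commute abs_of_nonneg)
    qed
    then show "AE x in torus_measure. norm (f x * h x) \<le> norm (B * f x)"
      by (intro AE_I2) simp
  qed
qed

lemma integral_mult_trig_poly_eq_0:
  assumes f: "integrable torus_measure f" and four: "\<And>k. fourier f k = 0"
  shows "h \<in> trig_poly \<Longrightarrow> (LINT x|torus_measure. f x * h x) = 0"
proof (induction h rule: trig_poly.induct)
  case (mode k)
  have "(LINT x|torus_measure. f x * fourier_mode k x) = fourier f (-k)"
    by (simp add: fourier_altdef cnj_fourier_mode)
  then show ?case using four by simp
next
  case (cmult h c)
  have "(LINT x|torus_measure. f x * (c * h x)) = c * (LINT x|torus_measure. f x * h x)"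
    by (simp add: algebra_simps)
  then show ?case using cmult.IH by simp
next
  case (add h g)
  have "(LINT x|torus_measure. f x * (h x + g x)) = (LINT x|torus_measure. f x * h x) + (LINT x|torus_measure. f x * g x)"
    by (simp add: distrib_left integrable_mult_continuous[OF f continuous_on_trig_poly[OF add.hyps(1)]] integrable_mult_continuous[OF f continuous_on_trig_poly[OF add.hyps(2)]])
  then show ?case using add.IH by simp
qed

lemma ramp_eventually_step:
  fixes s t :: real
  shows "eventually (\<lambda>n. max 0 (min 1 (real n * (s - t))) = (if s > t then 1 else 0)) sequentially"
proof (cases "s > t")
  case True
  obtain N :: nat where N: "1 / (s - t) \<le> real N" using real_arch_simple by blast
  have "max 0 (min 1 (real n * (s - t))) = 1" if "n \<ge> N" for n
  proof -
    have "1 / (s - t) \<le> real n" using N that by (meson of_nat_le_iff order_trans)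
    then have "1 \<le> real n * (s - t)" using True by (simp add: divide_le_eq)
    then show ?thesis by simp
  qed
  then show ?thesis using True unfolding eventually_sequentially by auto
next
  case False
  then have nonpos: "real n * (s - t) \<le> 0" for n by (simp add: mult_nonneg_nonpos)
  have "max 0 (min 1 (real n * (s - t))) = 0" for n
    using nonpos[of n] by (simp add: min_def max_def)
  then show ?thesis using False by simp
qed

text \<open>Uniform approximations of the ramps \<open>max 0 (min 1 (n (s - t)))\<close>, which converge
  pointwise to the step at \<open>t\<close>.\<close>

lemma polynomial_approx_step:
  fixes t :: real
  shows "\<exists>p :: nat \<Rightarrow> real \<Rightarrow> real. (\<forall>n. real_polynomial_function (p n)) \<and>
    (\<forall>n. \<forall>s\<in>{-1..1}. \<bar>p n s\<bar> \<le> 2) \<and>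
    (\<forall>s\<in>{-1..1}. (\<lambda>n. p n s) \<longlonglongrightarrow> (if s > t then 1 else 0))"
proof -
  define \<psi> where "\<psi> n s = max 0 (min 1 (real n * (s - t)))" for n :: nat and s
  have cont: "continuous_on {-1..1} (\<psi> n)" for n
    unfolding \<psi>_def by (intro continuous_intros)
  have "\<exists>q. real_polynomial_function q \<and> (\<forall>s\<in>{-1..1}. \<bar>\<psi> n s - q s\<bar> < 1 / (real n + 1))" for n
  proof -
    obtain q where "real_polynomial_function q" "\<And>s. s \<in> {-1..1} \<Longrightarrow> \<bar>\<psi> n s - q s\<bar> < 1 / (real n + 1)"
      using Stone_Weierstrass_real_polynomial_function[OF compact_Icc cont, of "1 / (real n + 1)"] by auto
    then show ?thesis by blast
  qed
  then obtain p where p: "\<And>n. real_polynomial_function (p n)"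
      "\<And>n s. s \<in> {-1..1} \<Longrightarrow> \<bar>\<psi> n s - p n s\<bar> < 1 / (real n + 1)"
    by metis
  have bnd: "\<bar>p n s\<bar> \<le> 2" if "s \<in> {-1..1}" for n s
  proof -
    have "1 / (real n + 1) \<le> 1" by (simp add: divide_le_eq)
    moreover have "0 \<le> \<psi> n s" "\<psi> n s \<le> 1" by (simp_all add: \<psi>_def)
    ultimately show ?thesis using p(2)[OF that, of n] by linarith
  qed
  have lim: "(\<lambda>n. p n s) \<longlonglongrightarrow> (if s > t then 1 else 0)" if s: "s \<in> {-1..1}" for s
  proof -
    have "(\<lambda>n. p n s - (if s > t then 1 else 0)) \<longlonglongrightarrow> 0"
    proof (rule Lim_null_comparison)
      show "eventually (\<lambda>n. norm (p n s - (if s > t then 1 else 0)) \<le> 1 / (real n + 1)) sequentially"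
        using ramp_eventually_step[of s t]
      proof eventually_elim
        case (elim n)
        then show ?case using p(2)[OF s, of n] by (simp add: \<psi>_def)
      qed
      show "(\<lambda>n. 1 / (real n + 1)) \<longlonglongrightarrow> 0"
        using LIMSEQ_inverse_real_of_nat by (simp add: inverse_eq_divide add.commute)
    qed
    then show ?thesis by (simp add: LIM_zero_iff)
  qed
  show ?thesis using p(1) bnd lim by blast
qed

lemma integral_mult_tendsto_eq_0:
  fixes f :: "'a \<Rightarrow> complex"
  assumes f: "integrable M f"
    and meas: "\<And>n. \<phi> n \<in> borel_measurable M" "h \<in> borel_measurable M"
    and bound: "\<And>n x. norm (\<phi> n x) \<le> C" and lim: "\<And>x. (\<lambda>n. \<phi> n x) \<longlonglongrightarrow> h x"
    and zero: "\<And>n. (LINT x|M. f x * \<phi> n x) = 0"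
  shows "(LINT x|M. f x * h x) = 0"
proof -
  have [measurable]: "f \<in> borel_measurable M" using f by auto
  note meas [measurable]
  have "(\<lambda>n. LINT x|M. f x * \<phi> n x) \<longlonglongrightarrow> (LINT x|M. f x * h x)"
  proof (rule integral_dominated_convergence[where w="\<lambda>x. C * norm (f x)"])
    show "AE x in M. norm (f x * \<phi> n x) \<le> C * norm (f x)" for n
      by (intro AE_I2) (simp add: norm_mult mult.commute[of C] mult_left_mono[OF bound])
    show "AE x in M. (\<lambda>n. f x * \<phi> n x) \<longlonglongrightarrow> f x * h x"
      by (intro AE_I2 tendsto_mult tendsto_const lim)
  qed (use f in auto)
  then show ?thesis using LIMSEQ_unique[OF _ tendsto_const[of 0]] by (simp add: zero)
qed

lemma integral_mult_arc_indicator_eq_0: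
  fixes f :: "real^'d \<Rightarrow> complex" and c t :: "real^'d"
  assumes f: "integrable torus_measure f" and four: "\<And>k. fourier f k = 0"
  shows "(LINT x|torus_measure. f x * (\<Prod>i\<in>UNIV. if cos (x $ i - c $ i) > t $ i then 1 else 0)) = 0"
proof -
  have "\<forall>i. \<exists>p :: nat \<Rightarrow> real \<Rightarrow> real. (\<forall>n. real_polynomial_function (p n)) \<and>
    (\<forall>n. \<forall>s\<in>{-1..1}. \<bar>p n s\<bar> \<le> 2) \<and>
    (\<forall>s\<in>{-1..1}. (\<lambda>n. p n s) \<longlonglongrightarrow> (if s > t $ i then 1 else 0))"
    using polynomial_approx_step by blast
  then obtain P where P: "\<And>i n. real_polynomial_function (P i n)"
    "\<And>i n s. s \<in> {-1..1} \<Longrightarrow> \<bar>P i n s\<bar> \<le> 2"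
    "\<And>i s. s \<in> {-1..1} \<Longrightarrow> (\<lambda>n. P i n s) \<longlonglongrightarrow> (if s > t $ i then 1 else 0)"
    by metis
  have cos_range: "cos y \<in> {-1..1}" for y :: real by simp
  define \<phi> where "\<phi> n x = (\<Prod>i\<in>UNIV. complex_of_real (P i n (cos (x $ i - c $ i))))" for n x
  have tp: "\<phi> n \<in> trig_poly" for n
    unfolding \<phi>_def by (intro trig_poly_prod trig_poly_polynomial_cos P(1)) auto
  show ?thesis
  proof (rule integral_mult_tendsto_eq_0[OF f])
    show "\<phi> n \<in> borel_measurable torus_measure" for n
      by (rule continuous_imp_measurable_torus[OF continuous_on_trig_poly[OF tp]])
    have "(\<lambda>x. cos (x $ i - c $ i)) \<in> borel_measurable torus_measure" for i
      by (rule continuous_imp_measurable_torus) (intro continuous_intros)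
    then show "(\<lambda>x. \<Prod>i\<in>UNIV. if cos (x $ i - c $ i) > t $ i then 1 else 0 :: complex)
        \<in> borel_measurable torus_measure"
      by measurable
    show "norm (\<phi> n x) \<le> 2 ^ CARD('d)" for n x
    proof -
      have "norm (\<phi> n x) \<le> (\<Prod>i\<in>(UNIV::'d set). 2)"
        unfolding \<phi>_def prod_norm[symmetric] by (intro prod_mono) (auto simp: P(2)[OF cos_range])
      then show ?thesis by simp
    qed
    show "(\<lambda>n. \<phi> n x) \<longlonglongrightarrow> (\<Prod>i\<in>UNIV. if cos (x $ i - c $ i) > t $ i then 1 else 0)" for x
      unfolding \<phi>_def
    proof (intro tendsto_prod)
      fix i
      have "(\<lambda>n. complex_of_real (P i n (cos (x $ i - c $ i)))) \<longlonglongrightarrow>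
          complex_of_real (if cos (x $ i - c $ i) > t $ i then 1 else 0)"
        by (intro tendsto_of_real P(3) cos_range)
      then show "(\<lambda>n. complex_of_real (P i n (cos (x $ i - c $ i)))) \<longlonglongrightarrow>
          (if cos (x $ i - c $ i) > t $ i then 1 else 0)"
        by (cases "cos (x $ i - c $ i) > t $ i") simp_all
    qed
    show "(LINT x|torus_measure. f x * \<phi> n x) = 0" for n
      by (rule integral_mult_trig_poly_eq_0[OF f four tp])
  qed
qed

lemma cos_gt_iff_mem_arc:
  fixes \<theta> a b :: real
  assumes th: "0 \<le> \<theta>" "\<theta> \<le> 2*pi" and ab: "0 \<le> a" "a < b" "b \<le> 2*pi"
  shows "(a < \<theta> \<and> \<theta> < b) \<longleftrightarrow> cos (\<theta> - (a+b)/2) > cos ((b-a)/2)"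
proof -
  define c where "c = (a+b)/2"
  define w where "w = (b-a)/2"
  define y where "y = \<theta> - c"
  have w: "0 < w" "w \<le> pi" using ab by (auto simp: w_def)
  have cwb: "c + w = b" "c - w = a" by (simp_all add: c_def w_def field_simps)
  have cw: "w \<le> c" "c + w \<le> 2*pi" using ab cwb by linarith+
  have "\<bar>y\<bar> < w \<longleftrightarrow> (c - w < \<theta> \<and> \<theta> < c + w)" by (auto simp: y_def abs_less_iff)
  then have iff: "(a < \<theta> \<and> \<theta> < b) \<longleftrightarrow> \<bar>y\<bar> < w" using cwb by simp
  consider "\<bar>y\<bar> \<le> pi" | "y > pi" | "y < -pi" by linarith
  then have "\<bar>y\<bar> < w \<longleftrightarrow> cos y > cos w"
  proof cases
    case 1
    then show ?thesis using cos_mono_less_eq[of w "\<bar>y\<bar>"] w by simp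
  next
    case 2
    have "w \<le> 2*pi - y" "2*pi - y \<le> pi" using 2 th cw by (auto simp: y_def)
    then have "cos (2*pi - y) \<le> cos w" using w by (intro cos_monotone_0_pi_le) auto
    then show ?thesis using 2 w by auto
  next
    case 3
    have "w \<le> y + 2*pi" "y + 2*pi \<le> pi" using 3 th cw by (auto simp: y_def)
    then have "cos (y + 2*pi) \<le> cos w" using w by (intro cos_monotone_0_pi_le) auto
    then show ?thesis using 3 w by auto
  qed
  then show ?thesis using iff by (simp add: c_def w_def y_def)
qed

lemma borel_measurable_indicator_torus:
  assumes "A \<in> sets borel"
  shows "(indicator A :: real^'d \<Rightarrow> real) \<in> borel_measurable torus_measure"
proof -
  have "(\<lambda>x. (indicator A (id x) :: real)) \<in> borel_measurable (torus_measure :: (real^'d) measure)"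
    by (rule measurable_compose[OF id_borel_measurable_lebesgue_on borel_measurable_indicator[OF assms]])
  then show ?thesis by (simp add: id_def)
qed

lemma borel_measurable_indicator_scaleR_torus:
  fixes f :: "real^'d \<Rightarrow> complex"
  assumes "A \<in> sets borel" "f \<in> borel_measurable torus_measure"
  shows "(\<lambda>x. indicator A x *\<^sub>R f x) \<in> borel_measurable torus_measure"
  using borel_measurable_indicator_torus[OF assms(1)] assms(2) by measurable

lemma mem_box_iff_cos_gt:
  fixes a b :: "real^'d"
  assumes x: "x \<in> torus" and ab: "\<And>i. 0 \<le> a $ i" "\<And>i. a $ i < b $ i" "\<And>i. b $ i \<le> 2*pi"
  shows "x \<in> box a b \<longleftrightarrow> (\<forall>i. cos (x $ i - (a $ i + b $ i) / 2) > cos ((b $ i - a $ i) / 2))"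
proof -
  have "(a $ i < x $ i \<and> x $ i < b $ i) \<longleftrightarrow> cos (x $ i - (a $ i + b $ i) / 2) > cos ((b $ i - a $ i) / 2)"
    for i
  proof -
    have "0 \<le> x $ i" "x $ i \<le> 2*pi" using x by (auto simp: torus_def mem_box_cart)
    then show ?thesis using cos_gt_iff_mem_arc ab by blast
  qed
  then show ?thesis by (auto simp: mem_box_cart)
qed

text \<open>Up to a null set, a box meets the torus in a box \<open>a\<^sub>i < x\<^sub>i < b\<^sub>i\<close> with
  \<open>0 \<le> a\<^sub>i, b\<^sub>i \<le> 2\<pi>\<close>, which is a product of arcs.\<close>

lemma integral_indicator_box_eq_0:
  fixes f :: "real^'d \<Rightarrow> complex" and a b :: "real^'d"
  assumes f: "integrable torus_measure f" and four: "\<And>k. fourier f k = 0"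
  shows "(LINT x|torus_measure. indicator (box a b) x *\<^sub>R f x) = 0"
proof -
  define a' :: "real^'d" where "a' = (\<chi> i. max (a $ i) 0)"
  define b' :: "real^'d" where "b' = (\<chi> i. min (b $ i) (2*pi))"
  have "indicator (box a b) x = (indicator (box a' b') x :: real)" if "x \<in> box 0 (\<chi> i. 2*pi)" for x
    using that unfolding indicator_def by (auto simp: mem_box_cart a'_def b'_def)
  then have "(LINT x|torus_measure. indicator (box a b) x *\<^sub>R f x)
      = (LINT x|torus_measure. indicator (box a' b') x *\<^sub>R f x)"
    by (intro integral_cong_AE)
       (use AE_torus_in_box f in \<open>auto elim!: eventually_mono intro!: borel_measurable_indicator_scaleR_torus\<close>)
  also have "\<dots> = 0"
  proof (cases "\<forall>i. a' $ i < b' $ i")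
    case True
    define c :: "real^'d" where "c = (\<chi> i. (a' $ i + b' $ i) / 2)"
    define t :: "real^'d" where "t = (\<chi> i. cos ((b' $ i - a' $ i) / 2))"
    have "indicator (box a' b') x *\<^sub>R f x = f x * (\<Prod>i\<in>UNIV. if cos (x $ i - c $ i) > t $ i then 1 else 0)"
      if "x \<in> torus" for x
      using mem_box_iff_cos_gt[OF that, of a' b'] True
      by (cases "x \<in> box a' b'") (auto simp: indicator_def c_def t_def a'_def b'_def intro: prod_zero)
    then have "(LINT x|torus_measure. indicator (box a' b') x *\<^sub>R f x) =
        (LINT x|torus_measure. f x * (\<Prod>i\<in>UNIV. if cos (x $ i - c $ i) > t $ i then 1 else 0))"
      by (intro Bochner_Integration.integral_cong) auto
    also have "\<dots> = 0" by (rule integral_mult_arc_indicator_eq_0[OF f four])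
    finally show ?thesis .
  next
    case False
    then obtain i where i: "b' $ i \<le> a' $ i" by (auto simp: not_less)
    have "box a' b' = {}"
      using i by (auto simp: mem_box_cart dest!: spec[of _ i])
    then show ?thesis by simp
  qed
  finally show ?thesis .
qed

lemma Int_stable_boxes: "Int_stable (range (\<lambda>(a, b). box a b :: (real^'d) set))"
proof (rule Int_stableI)
  fix X Y assume "X \<in> range (\<lambda>(a, b). box a b :: (real^'d) set)" "Y \<in> range (\<lambda>(a, b). box a b :: (real^'d) set)"
  then obtain a b c d where XY: "X = box a b" "Y = box c d" by auto
  have "X \<inter> Y = box (\<chi> i. max (a $ i) (c $ i)) (\<chi> i. min (b $ i) (d $ i))"
    unfolding XY by (auto simp: mem_box_cart)
  then show "X \<inter> Y \<in> range (\<lambda>(a, b). box a b)" by auto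
qed

lemma integrable_indicator_scaleR:
  fixes f :: "'a \<Rightarrow> 'b::{banach, second_countable_topology}"
  assumes f: "integrable M f" and A: "(indicator A :: 'a \<Rightarrow> real) \<in> borel_measurable M"
  shows "integrable M (\<lambda>x. indicator A x *\<^sub>R f x)"
proof (rule Bochner_Integration.integrable_bound[OF f])
  show "(\<lambda>x. indicator A x *\<^sub>R f x) \<in> borel_measurable M"
    by (rule borel_measurable_scaleR[OF A borel_measurable_integrable[OF f]])
qed (simp add: indicator_def)

lemma integral_indicator_UN_disjoint_eq_0:
  fixes f :: "'a \<Rightarrow> 'b::{banach, second_countable_topology}" and A :: "nat \<Rightarrow> 'a set"
  assumes f: "integrable M f" and disj: "disjoint_family A"
    and meas: "\<And>i. (indicator (A i) :: 'a \<Rightarrow> real) \<in> borel_measurable M"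
      "(indicator (\<Union>i. A i) :: 'a \<Rightarrow> real) \<in> borel_measurable M"
    and zero: "\<And>i. (LINT x|M. indicator (A i) x *\<^sub>R f x) = 0"
  shows "(LINT x|M. indicator (\<Union>i. A i) x *\<^sub>R f x) = 0"
proof -
  have [measurable]: "f \<in> borel_measurable M" using f by auto
  note meas [measurable]
  have partial: "indicator (\<Union>i<k. A i) x *\<^sub>R f x = (\<Sum>i<k. indicator (A i) x *\<^sub>R f x)" for k x
  proof -
    have "indicator (\<Union>i<k. A i) x = (\<Sum>i<k. indicator (A i) x :: real)"
      using indicator_UN_disjoint[of "{..<k}" A x] disjoint_family_on_mono[OF _ disj] by auto
    then show ?thesis by (simp add: scaleR_sum_left)
  qed
  have "(\<lambda>k. LINT x|M. (\<Sum>i<k. indicator (A i) x *\<^sub>R f x)) \<longlonglongrightarrow> (LINT x|M. indicator (\<Union>i. A i) x *\<^sub>R f x)"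
  proof (rule integral_dominated_convergence[where w="\<lambda>x. norm (f x)"])
    show "AE x in M. (\<lambda>k. \<Sum>i<k. indicator (A i) x *\<^sub>R f x) \<longlonglongrightarrow> indicator (\<Union>i. A i) x *\<^sub>R f x"
      unfolding partial[symmetric] by (intro AE_I2 tendsto_scaleR LIMSEQ_indicator_UN tendsto_const)
    show "AE x in M. norm (\<Sum>i<k. indicator (A i) x *\<^sub>R f x) \<le> norm (f x)" for k
      unfolding partial[symmetric] by (intro AE_I2) (simp add: indicator_def)
    show "(\<lambda>x. \<Sum>i<k. indicator (A i) x *\<^sub>R f x) \<in> borel_measurable M" for k
      using f by (intro borel_measurable_sum borel_measurable_scaleR meas) auto
    show "(\<lambda>x. indicator (\<Union>i. A i) x *\<^sub>R f x) \<in> borel_measurable M"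
      using f by (intro borel_measurable_scaleR meas) auto
  qed (use f in auto)
  moreover have "(LINT x|M. (\<Sum>i<k. indicator (A i) x *\<^sub>R f x)) = 0" for k
  proof -
    have "(LINT x|M. (\<Sum>i<k. indicator (A i) x *\<^sub>R f x)) = (\<Sum>i<k. LINT x|M. indicator (A i) x *\<^sub>R f x)"
      by (rule Bochner_Integration.integral_sum) (rule integrable_indicator_scaleR[OF f meas(1)])
    then show ?thesis by (simp add: zero)
  qed
  ultimately show ?thesis using LIMSEQ_unique[OF _ tendsto_const[of 0]] by simp
qed

text \<open>Dynkin's \<open>\<pi>\<close>-\<open>\<lambda>\<close> argument, starting from the open boxes.\<close>

lemma integral_indicator_borel_eq_0:
  fixes f :: "real^'d \<Rightarrow> complex"
  assumes f: "integrable torus_measure f" and four: "\<And>k. fourier f k = 0"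
  assumes A: "A \<in> sets borel"
  shows "(LINT x|torus_measure. indicator A x *\<^sub>R f x) = 0"
proof -
  let ?G = "range (\<lambda>(a, b). box a b :: (real^'d) set)"
  have sb: "sets borel = sigma_sets UNIV ?G"
    by (subst borel_eq_box) (rule sets_measure_of, auto)
  have G: "?G \<subseteq> Pow UNIV" by simp
  have "A \<in> sigma_sets UNIV ?G" using A sb by simp
  with Int_stable_boxes G show ?thesis
  proof (induction rule: sigma_sets_induct_disjoint)
    case (basic A)
    then obtain a b where "A = box a b" by auto
    then show ?case using integral_indicator_box_eq_0[OF f four] by simp
  next
    case (compl A)
    have "(LINT x|torus_measure. indicator (UNIV - A) x *\<^sub>R f x)
        = (LINT x|torus_measure. f x - indicator A x *\<^sub>R f x)"
      by (intro Bochner_Integration.integral_cong) (auto simp: indicator_def)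
    also have "\<dots> = (LINT x|torus_measure. f x) - (LINT x|torus_measure. indicator A x *\<^sub>R f x)"
      using compl(1) sb
      by (intro Bochner_Integration.integral_diff f integrable_indicator_scaleR borel_measurable_indicator_torus)
         simp
    finally show ?case using compl(2) four[of 0] by (simp add: fourier_altdef)
  next
    case (union A)
    then show ?case using sb
      by (intro integral_indicator_UN_disjoint_eq_0[OF f] borel_measurable_indicator_torus)
         (auto intro: sigma_sets.Union)
  qed simp
qed

lemma integral_indicator_eq_0:
  fixes f :: "real^'d \<Rightarrow> complex"
  assumes f: "integrable torus_measure f" and four: "\<And>k. fourier f k = 0"
  assumes S: "S \<in> sets torus_measure"
  shows "(LINT x|torus_measure. indicator S x *\<^sub>R f x) = 0"
proof -
  obtain L where L: "L \<in> sets lebesgue" "S = torus \<inter> L"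
    using S by (auto simp: sets_restrict_space)
  obtain B N N' where BN: "L = B \<union> N" "N \<subseteq> N'" "N' \<in> null_sets lborel" "B \<in> sets lborel"
    using sets_completionE[OF L(1)] by metis
  have "N' \<in> null_sets lebesgue" using BN(3) by (rule null_sets_completionI)
  then have "AE x in lebesgue. x \<notin> N'" by (rule AE_not_in)
  then have ae: "AE x in torus_measure. x \<notin> N'"
    by (subst AE_restrict_space_iff) (auto elim: eventually_mono)
  have Bb: "B \<in> sets borel" using BN(4) by simp
  have "(LINT x|torus_measure. indicator S x *\<^sub>R f x) = (LINT x|torus_measure. indicator B x *\<^sub>R f x)"
  proof (rule integral_cong_AE)
    have [measurable]: "f \<in> borel_measurable torus_measure" using f by auto
    show "(\<lambda>x. indicator S x *\<^sub>R f x) \<in> borel_measurable torus_measure"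
      using S by measurable
    show "(\<lambda>x. indicator B x *\<^sub>R f x) \<in> borel_measurable torus_measure"
      using f Bb by (intro borel_measurable_indicator_scaleR_torus) auto
    show "AE x in torus_measure. indicator S x *\<^sub>R f x = indicator B x *\<^sub>R f x"
      using ae
    proof (rule eventually_mono[OF eventually_conj[OF _ AE_space]])
      fix x assume "x \<notin> N' \<and> x \<in> space torus_measure"
      then have "x \<in> torus" "x \<notin> N" using BN(2) by auto
      then have "x \<in> S \<longleftrightarrow> x \<in> B" using L(2) BN(1) by auto
      then show "indicator S x *\<^sub>R f x = indicator B x *\<^sub>R f x" by (simp add: indicator_def)
    qed
  qed
  also have "\<dots> = 0" by (rule integral_indicator_borel_eq_0[OF f four Bb])
  finally show ?thesis .
qed

theorem fourier_eq_0_imp_AE_0: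
  fixes f :: "real^'d \<Rightarrow> complex"
  assumes f: "integrable torus_measure f" and four: "\<And>k. fourier f k = 0"
  shows "AE x in torus_measure. f x = 0"
proof -
  interpret finite_measure "torus_measure :: (real^'d) measure" by (rule finite_measure_torus)
  show ?thesis
    by (rule density_zero[OF f]) (simp add: set_lebesgue_integral_def integral_indicator_eq_0[OF f four])
qed

section \<open>Parseval's identity and the Fourier multipliers\<close>

lemma L2_fourier_eq_imp_AE_eq:
  assumes u: "L2 u" and w: "L2 w" and eq: "\<And>k. fourier u k = fourier w k"
  shows "AE x in torus_measure. u x = w x"
proof -
  have "AE x in torus_measure. u x - w x = 0"
    by (rule fourier_eq_0_imp_AE_0[OF L2_integrable[OF L2_diff[OF u w]]])
       (simp add: fourier_diff[OF u w] eq)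
  then show ?thesis by auto
qed

theorem Parseval:
  fixes u :: "real^'d \<Rightarrow> complex"
  assumes u: "L2 u"
  shows "((\<lambda>k. (cmod (fourier u k))\<^sup>2) has_sum (tvol TYPE('d) * L2norm2 u)) UNIV"
proof -
  obtain w where w: "L2 w" "\<And>k. fourier w k = fourier u k"
      "((\<lambda>k. (cmod (fourier u k))\<^sup>2) has_sum (tvol TYPE('d) * L2norm2 w)) UNIV"
    using Riesz_Fischer[OF fourier_sq_summable[OF u]] by blast
  have "AE x in torus_measure. u x = w x" by (rule L2_fourier_eq_imp_AE_eq[OF u w(1)]) (simp add: w(2))
  then have "L2norm2 u = L2norm2 w" by (rule L2norm2_AE_cong[OF u w(1)])
  then show ?thesis using w(3) by simp
qed

lemma L2_SOME_fourier:
  assumes "(\<lambda>k. (cmod (c k))\<^sup>2) summable_on UNIV"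
  defines "w \<equiv> SOME w. L2 w \<and> (\<forall>k. fourier w k = c k)"
  shows "L2 w \<and> (\<forall>k. fourier w k = c k)"
proof -
  have "\<exists>w. L2 w \<and> (\<forall>k. fourier w k = c k)" using Riesz_Fischer[OF assms(1)] by blast
  then show ?thesis unfolding w_def by (rule someI_ex)
qed

lemma H0_imp_L2: "u \<in> H0 s \<Longrightarrow> L2 u"
  by (simp add: H0_def L2_0_def)

lemma H0_fourier_0: "u \<in> H0 s \<Longrightarrow> fourier u 0 = 0"
  by (simp add: H0_def L2_0_def)

text \<open>The term at \<open>k = 0\<close> vanishes, as \<open>0 powr x = 0\<close>.\<close>

lemma H0_weighted_summable:
  assumes "u \<in> H0 s"
  shows "(\<lambda>k. norm (lat k) powr (2 * s) * (cmod (fourier u k))\<^sup>2) summable_on UNIV"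
proof -
  let ?f = "\<lambda>k. norm (lat k) powr (2 * s) * (cmod (fourier u k))\<^sup>2"
  have "?f summable_on (UNIV - {0})" using assms by (simp add: H0_def)
  then show ?thesis
    using H0_fourier_0[OF assms] by (subst summable_on_cong_neutral[where T="UNIV - {0}" and g="?f"]) auto
qed

lemma powr_lat_pos: "k \<noteq> 0 \<Longrightarrow> norm (lat k) powr p > 0"
  using norm_lat_ge_1[of k] by simp

lemma frac_lap_H0:
  assumes u: "u \<in> H0 s"
  shows "L2 (frac_lap (s/2) u)"
    and "(cmod (fourier (frac_lap (s/2) u) k))\<^sup>2 = norm (lat k) powr (2 * s) * (cmod (fourier u k))\<^sup>2"
proof -
  have sq: "(cmod (of_real (lap_mult (s/2) k) * fourier u k))\<^sup>2 = norm (lat k) powr (2 * s) * (cmod (fourier u k))\<^sup>2"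
    for k
    using H0_fourier_0[OF u] powr_lat_pos[of k]
    by (cases "k = 0") (simp_all add: lap_mult_def norm_mult power_mult_distrib powr_powr[symmetric]
        power2_eq_square powr_add[symmetric])
  have "L2 (frac_lap (s/2) u) \<and> (\<forall>k. fourier (frac_lap (s/2) u) k = of_real (lap_mult (s/2) k) * fourier u k)"
    unfolding frac_lap_def by (rule L2_SOME_fourier) (simp add: sq H0_weighted_summable[OF u])
  then show "L2 (frac_lap (s/2) u)"
    and "(cmod (fourier (frac_lap (s/2) u) k))\<^sup>2 = norm (lat k) powr (2 * s) * (cmod (fourier u k))\<^sup>2"
    by (simp_all add: sq)
qed

lemma riesz_H0:
  assumes v: "v \<in> H0 s"
  shows "L2 (riesz (s/2) v)"
    and "(cmod (fourier (riesz (s/2) v) k))\<^sup>2 = norm (lat k) powr (2 * s) * (cmod (fourier v k))\<^sup>2"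
proof -
  let ?c = "\<lambda>k. if k = 0 then 0 else of_real (norm (lat k) powr (2 * (s/2))) * fourier v k"
  have sq: "(cmod (?c k))\<^sup>2 = norm (lat k) powr (2 * s) * (cmod (fourier v k))\<^sup>2" for k
    using H0_fourier_0[OF v] powr_lat_pos[of k]
    by (cases "k = 0") (simp_all add: norm_mult power_mult_distrib power2_eq_square powr_add[symmetric])
  have "L2 (riesz (s/2) v) \<and> (\<forall>k. fourier (riesz (s/2) v) k = ?c k)"
    unfolding riesz_def by (rule L2_SOME_fourier) (simp add: sq H0_weighted_summable[OF v])
  then show "L2 (riesz (s/2) v)"
    and "(cmod (fourier (riesz (s/2) v) k))\<^sup>2 = norm (lat k) powr (2 * s) * (cmod (fourier v k))\<^sup>2"
    by (simp_all add: sq)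
qed

section \<open>The energy in Fourier variables\<close>

definition mode_energy :: "real \<Rightarrow> real \<Rightarrow> real \<Rightarrow> complex \<Rightarrow> complex \<Rightarrow> complex \<Rightarrow> real" where
  "mode_energy A B \<alpha> \<gamma> a b = A * (cmod a)\<^sup>2 + \<alpha> * (cmod (a + b - \<gamma>))\<^sup>2 + B * (cmod b)\<^sup>2"

lemma energy_has_sum:
  fixes g u v :: "real^'d \<Rightarrow> complex"
  assumes g: "L2 g" and u: "u \<in> H0 s1" and v: "v \<in> H0 s2"
  shows "((\<lambda>k. mode_energy (norm (lat k) powr (2 * s1)) (\<beta> * norm (lat k) powr (2 * s2)) \<alpha>
            (fourier g k) (fourier u k) (fourier v k))
          has_sum (2 * tvol TYPE('d) * energy s1 s2 \<alpha> \<beta> g u v)) UNIV"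
proof -
  have uL: "L2 u" and vL: "L2 v" using u v by (auto intro: H0_imp_L2)
  have w: "L2 (\<lambda>x. u x + v x - g x)" by (intro L2_diff L2_add uL vL g)
  have fw: "fourier (\<lambda>x. u x + v x - g x) k = fourier u k + fourier v k - fourier g k" for k
    by (simp add: fourier_diff[OF L2_add[OF uL vL] g] fourier_add[OF uL vL])
  have "((\<lambda>k. norm (lat k) powr (2 * s1) * (cmod (fourier u k))\<^sup>2
           + \<alpha> * (cmod (fourier u k + fourier v k - fourier g k))\<^sup>2
           + \<beta> * (norm (lat k) powr (2 * s2) * (cmod (fourier v k))\<^sup>2))
        has_sum (tvol TYPE('d) * L2norm2 (frac_lap (s1/2) u)
           + \<alpha> * (tvol TYPE('d) * L2norm2 (\<lambda>x. u x + v x - g x))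
           + \<beta> * (tvol TYPE('d) * L2norm2 (riesz (s2/2) v)))) UNIV"
    using Parseval[OF frac_lap_H0(1)[OF u]] Parseval[OF w] Parseval[OF riesz_H0(1)[OF v]]
    by (intro has_sum_add has_sum_cmult_right) (simp_all add: frac_lap_H0(2)[OF u] riesz_H0(2)[OF v] fw)
  then show ?thesis
    by (simp add: mode_energy_def energy_def algebra_simps)
qed

lemma quadratic_split_real:
  fixes A B \<alpha> \<gamma> x' y' D :: real
  assumes D: "D = A*B + \<alpha>*A + \<alpha>*B" "D \<noteq> 0"
  defines "x \<equiv> \<alpha>*B*\<gamma>/D" and "y \<equiv> \<alpha>*A*\<gamma>/D"
  shows "A*x'\<^sup>2 + \<alpha>*(x'+y'-\<gamma>)\<^sup>2 + B*y'\<^sup>2 =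
     (A*x\<^sup>2 + \<alpha>*(x+y-\<gamma>)\<^sup>2 + B*y\<^sup>2) + (A*(x' - x)\<^sup>2 + \<alpha>*((x' - x) + (y' - y))\<^sup>2 + B*(y' - y)\<^sup>2)"
proof -
  have "A*x + \<alpha>*(x+y-\<gamma>) = (\<alpha>*\<gamma>/D) * (A*B + \<alpha>*A + \<alpha>*B) - \<alpha>*\<gamma>"
    "B*y + \<alpha>*(x+y-\<gamma>) = (\<alpha>*\<gamma>/D) * (A*B + \<alpha>*A + \<alpha>*B) - \<alpha>*\<gamma>"
    using D(2) unfolding x_def y_def by (simp_all add: field_simps)
  then have crit: "A*x + \<alpha>*(x+y-\<gamma>) = 0" "B*y + \<alpha>*(x+y-\<gamma>) = 0"
    using D by simp_all
  have "A*x'\<^sup>2 + \<alpha>*(x'+y'-\<gamma>)\<^sup>2 + B*y'\<^sup>2 -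
     ((A*x\<^sup>2 + \<alpha>*(x+y-\<gamma>)\<^sup>2 + B*y\<^sup>2) + (A*(x' - x)\<^sup>2 + \<alpha>*((x' - x) + (y' - y))\<^sup>2 + B*(y' - y)\<^sup>2))
     = 2*(x'-x)*(A*x + \<alpha>*(x+y-\<gamma>)) + 2*(y'-y)*(B*y + \<alpha>*(x+y-\<gamma>))"
    by (simp add: algebra_simps power2_eq_square)
  then show ?thesis using crit by simp
qed

text \<open>\<open>D\<close> is the determinant of the matrix \<open>((A + \<alpha>, \<alpha>), (\<alpha>, B + \<alpha>))\<close> of the form, and
  \<open>(a\<^sub>0, b\<^sub>0)\<close> solves the normal equations \<open>A a + \<alpha> (a + b - \<gamma>) = 0 = B b + \<alpha> (a + b - \<gamma>)\<close>.\<close>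

lemma mode_energy_split:
  fixes A B \<alpha> :: real and \<gamma> a b :: complex
  assumes "A*B + \<alpha>*A + \<alpha>*B \<noteq> 0"
  defines "D \<equiv> A*B + \<alpha>*A + \<alpha>*B"
  defines "a\<^sub>0 \<equiv> complex_of_real (\<alpha>*B/D) * \<gamma>" and "b\<^sub>0 \<equiv> complex_of_real (\<alpha>*A/D) * \<gamma>"
  shows "mode_energy A B \<alpha> \<gamma> a b = mode_energy A B \<alpha> \<gamma> a\<^sub>0 b\<^sub>0 + mode_energy A B \<alpha> 0 (a - a\<^sub>0) (b - b\<^sub>0)"
proof -
  have D: "D = A*B + \<alpha>*A + \<alpha>*B" "D \<noteq> 0" using assms(1) by (simp_all add: D_def)
  have "Re a\<^sub>0 = \<alpha>*B*Re \<gamma>/D" "Re b\<^sub>0 = \<alpha>*A*Re \<gamma>/D" "Im a\<^sub>0 = \<alpha>*B*Im \<gamma>/D" "Im b\<^sub>0 = \<alpha>*A*Im \<gamma>/D"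
    by (simp_all add: a\<^sub>0_def b\<^sub>0_def)
  then show ?thesis
    using quadratic_split_real[OF D, where \<gamma>="Re \<gamma>" and x'="Re a" and y'="Re b"]
      quadratic_split_real[OF D, where \<gamma>="Im \<gamma>" and x'="Im a" and y'="Im b"]
    unfolding mode_energy_def cmod_power2 by (simp add: algebra_simps)
qed

lemma mode_energy_nonneg: "A \<ge> 0 \<Longrightarrow> B \<ge> 0 \<Longrightarrow> \<alpha> \<ge> 0 \<Longrightarrow> mode_energy A B \<alpha> \<gamma> a b \<ge> 0"
  unfolding mode_energy_def by simp

lemma mode_energy_eq_0_imp:
  assumes "A > 0" "B > 0" "\<alpha> \<ge> 0" "mode_energy A B \<alpha> 0 a b = 0"
  shows "a = 0" "b = 0"
proof -
  have "0 \<le> A * (cmod a)\<^sup>2" "0 \<le> \<alpha> * (cmod (a + b))\<^sup>2" "0 \<le> B * (cmod b)\<^sup>2"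
    using assms(1-3) by simp_all
  moreover have "A * (cmod a)\<^sup>2 + \<alpha> * (cmod (a + b))\<^sup>2 + B * (cmod b)\<^sup>2 = 0"
    using assms(4) by (simp add: mode_energy_def)
  ultimately have "A * (cmod a)\<^sup>2 = 0" "B * (cmod b)\<^sup>2 = 0" by linarith+
  then show "a = 0" "b = 0" using assms(1,2) by simp_all
qed

section \<open>The minimiser\<close>

locale uv_decomposition =
  fixes s1 s2 \<alpha> \<beta> :: real and g :: "real^'d \<Rightarrow> complex"
  assumes s2_nonpos: "s2 \<le> 0" and \<alpha>_pos: "\<alpha> > 0" and \<beta>_pos: "\<beta> > 0" and L2_g: "L2 g"
begin

definition u_weight :: "int^'d \<Rightarrow> real" where
  "u_weight k = norm (lat k) powr (2 * s1)"

definition v_weight :: "int^'d \<Rightarrow> real" where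
  "v_weight k = \<beta> * norm (lat k) powr (2 * s2)"

definition det_weight :: "int^'d \<Rightarrow> real" where
  "det_weight k = u_weight k * v_weight k + \<alpha> * u_weight k + \<alpha> * v_weight k"

text \<open>At \<open>k = 0\<close> all weights vanish (\<open>0 powr x = 0\<close>), so division by zero makes both
  optimal coefficients \<open>0\<close>, as required for mean-zero functions.\<close>

definition u_coeff :: "int^'d \<Rightarrow> complex" where
  "u_coeff k = of_real (\<alpha> * v_weight k / det_weight k) * fourier g k"

definition v_coeff :: "int^'d \<Rightarrow> complex" where
  "v_coeff k = of_real (\<alpha> * u_weight k / det_weight k) * fourier g k"

definition u_min :: "real^'d \<Rightarrow> complex" where
  "u_min = (SOME w. L2 w \<and> (\<forall>k. fourier w k = u_coeff k))"

definition v_min :: "real^'d \<Rightarrow> complex" where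
  "v_min = (SOME w. L2 w \<and> (\<forall>k. fourier w k = v_coeff k))"

lemma weights_pos:
  assumes "k \<noteq> 0"
  shows "u_weight k > 0" "v_weight k > 0" "det_weight k > 0"
  using powr_lat_pos[OF assms] \<alpha>_pos \<beta>_pos
  by (simp_all add: u_weight_def v_weight_def det_weight_def add_pos_pos)

lemma coeff_0: "u_coeff 0 = 0" "v_coeff 0 = 0"
  by (simp_all add: u_coeff_def v_coeff_def det_weight_def u_weight_def v_weight_def)

lemma coeff_bounds:
  shows "(cmod (u_coeff k))\<^sup>2 \<le> (cmod (fourier g k))\<^sup>2"
    and "u_weight k * (cmod (u_coeff k))\<^sup>2 \<le> \<alpha> * (cmod (fourier g k))\<^sup>2"
    and "(cmod (v_coeff k))\<^sup>2 \<le> (cmod (fourier g k))\<^sup>2"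
proof -
  define A where "A = u_weight k"
  define B where "B = v_weight k"
  define D where "D = det_weight k"
  have sq: "(cmod (u_coeff k))\<^sup>2 = (\<alpha>*B/D)\<^sup>2 * (cmod (fourier g k))\<^sup>2"
    "(cmod (v_coeff k))\<^sup>2 = (\<alpha>*A/D)\<^sup>2 * (cmod (fourier g k))\<^sup>2"
    by (simp_all only: u_coeff_def v_coeff_def A_def B_def D_def norm_mult norm_of_real
        power_mult_distrib power2_abs)
  have "(\<alpha>*B/D)\<^sup>2 \<le> 1 \<and> A * (\<alpha>*B/D)\<^sup>2 \<le> \<alpha> \<and> (\<alpha>*A/D)\<^sup>2 \<le> 1"
  proof (cases "k = 0")
    case False
    have A: "A > 0" and B: "B > 0" and D_eq: "D = A*B + \<alpha>*A + \<alpha>*B"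
      using weights_pos[OF False] by (simp_all add: A_def B_def D_def det_weight_def)
    have D: "D > 0" using A B \<alpha>_pos by (simp add: D_eq add_pos_pos)
    have "\<alpha>*B \<le> D" "\<alpha>*A \<le> D" using A B \<alpha>_pos by (simp_all add: D_eq)
    then have "(\<alpha>*B/D)\<^sup>2 \<le> 1" "(\<alpha>*A/D)\<^sup>2 \<le> 1"
      using A B D \<alpha>_pos by (simp_all add: power_le_one)
    moreover have "A * (\<alpha>*B/D)\<^sup>2 \<le> \<alpha>"
    proof -
      have "B\<^sup>2 * (A*\<alpha>) \<le> B\<^sup>2 * (A+\<alpha>)\<^sup>2"
        using A \<alpha>_pos by (intro mult_left_mono) (simp_all add: power2_eq_square algebra_simps)
      also have "\<dots> = (B*(A+\<alpha>))\<^sup>2" by (simp add: power_mult_distrib)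
      also have "\<dots> \<le> D\<^sup>2"
        using A B \<alpha>_pos by (intro power_mono) (simp_all add: D_eq algebra_simps)
      finally show ?thesis
        using D \<alpha>_pos by (simp add: power_divide power_mult_distrib power2_eq_square field_simps)
    qed
    ultimately show ?thesis by simp
  qed (use \<alpha>_pos in \<open>simp add: A_def u_weight_def B_def v_weight_def D_def det_weight_def\<close>)
  then show "(cmod (u_coeff k))\<^sup>2 \<le> (cmod (fourier g k))\<^sup>2"
    and "u_weight k * (cmod (u_coeff k))\<^sup>2 \<le> \<alpha> * (cmod (fourier g k))\<^sup>2"
    and "(cmod (v_coeff k))\<^sup>2 \<le> (cmod (fourier g k))\<^sup>2"
    unfolding sq A_def[symmetric] mult.assoc[symmetric]
    by (auto intro: mult_left_le_one_le mult_right_mono)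
qed

lemma u_min_spec: "L2 u_min" "fourier u_min k = u_coeff k"
proof -
  have "(\<lambda>k. (cmod (u_coeff k))\<^sup>2) summable_on UNIV"
    by (rule summable_on_comparison_test[OF fourier_sq_summable[OF L2_g]]) (use coeff_bounds in auto)
  then show "L2 u_min" "fourier u_min k = u_coeff k"
    using L2_SOME_fourier unfolding u_min_def by blast+
qed

lemma v_min_spec: "L2 v_min" "fourier v_min k = v_coeff k"
proof -
  have "(\<lambda>k. (cmod (v_coeff k))\<^sup>2) summable_on UNIV"
    by (rule summable_on_comparison_test[OF fourier_sq_summable[OF L2_g]]) (use coeff_bounds in auto)
  then show "L2 v_min" "fourier v_min k = v_coeff k"
    using L2_SOME_fourier unfolding v_min_def by blast+
qed

lemma u_min_H0: "u_min \<in> H0 s1"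
  unfolding H0_def L2_0_def
proof (intro CollectI conjI)
  have "(\<lambda>k. \<alpha> * (cmod (fourier g k))\<^sup>2) summable_on (UNIV - {0})"
    by (rule summable_on_subset_banach[OF summable_on_cmult_right[OF fourier_sq_summable[OF L2_g]]]) simp
  then show "(\<lambda>k. norm (lat k) powr (2 * s1) * (cmod (fourier u_min k))\<^sup>2) summable_on (UNIV - {0})"
    by (rule summable_on_comparison_test) (use coeff_bounds in \<open>auto simp: u_min_spec u_weight_def\<close>)
qed (simp_all add: u_min_spec coeff_0)

text \<open>Here \<open>s\<^sub>2 \<le> 0\<close> is used: the weight \<open>|k|\<^bsup>2 s\<^sub>2\<^esup>\<close> is at most \<open>1\<close>.\<close>

lemma v_min_H0: "v_min \<in> H0 s2"
  unfolding H0_def L2_0_def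
proof (intro CollectI conjI)
  have "norm (lat k) powr (2 * s2) * (cmod (v_coeff k))\<^sup>2 \<le> (cmod (fourier g k))\<^sup>2" if "k \<noteq> 0" for k
  proof -
    have "norm (lat k) powr (2 * s2) \<le> norm (lat k) powr 0"
      using s2_nonpos norm_lat_ge_1[OF that] by (intro powr_mono) simp_all
    then have "norm (lat k) powr (2 * s2) * (cmod (v_coeff k))\<^sup>2 \<le> 1 * (cmod (v_coeff k))\<^sup>2"
      using that by (intro mult_right_mono) simp_all
    then show ?thesis using coeff_bounds(3)[of k] by linarith
  qed
  then show "(\<lambda>k. norm (lat k) powr (2 * s2) * (cmod (fourier v_min k))\<^sup>2) summable_on (UNIV - {0})"
    by (intro summable_on_comparison_test[OF summable_on_subset_banach[OF fourier_sq_summable[OF L2_g]]])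
       (auto simp: v_min_spec)
qed (simp_all add: v_min_spec coeff_0)

lemma energy_excess_has_sum:
  assumes u: "u \<in> H0 s1" and v: "v \<in> H0 s2"
  shows "((\<lambda>k. mode_energy (u_weight k) (v_weight k) \<alpha> 0 (fourier u k - u_coeff k) (fourier v k - v_coeff k))
     has_sum (2 * tvol TYPE('d) * (energy s1 s2 \<alpha> \<beta> g u v - energy s1 s2 \<alpha> \<beta> g u_min v_min))) UNIV"
proof -
  let ?E = "\<lambda>u v k. mode_energy (u_weight k) (v_weight k) \<alpha> (fourier g k) (fourier u k) (fourier v k)"
  have split: "?E u v k = ?E u_min v_min k
      + mode_energy (u_weight k) (v_weight k) \<alpha> 0 (fourier u k - u_coeff k) (fourier v k - v_coeff k)" for k
  proof (cases "k = 0")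
    case True
    then show ?thesis by (simp add: H0_fourier_0[OF u] H0_fourier_0[OF v] u_min_spec v_min_spec coeff_0 mode_energy_def)
  next
    case False
    then have "u_weight k * v_weight k + \<alpha> * u_weight k + \<alpha> * v_weight k \<noteq> 0"
      using weights_pos(3)[OF False] by (simp add: det_weight_def)
    from mode_energy_split[OF this, of "fourier g k" "fourier u k" "fourier v k"] show ?thesis
      by (simp only: u_min_spec v_min_spec u_coeff_def v_coeff_def det_weight_def)
  qed
  have "((\<lambda>k. ?E u v k - ?E u_min v_min k)
      has_sum (2 * tvol TYPE('d) * energy s1 s2 \<alpha> \<beta> g u v - 2 * tvol TYPE('d) * energy s1 s2 \<alpha> \<beta> g u_min v_min)) UNIV"
    using has_sum_add[OF energy_has_sum[OF L2_g u v, where \<alpha>=\<alpha> and \<beta>=\<beta>]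
        has_sum_uminusI[OF energy_has_sum[OF L2_g u_min_H0 v_min_H0, where \<alpha>=\<alpha> and \<beta>=\<beta>]]]
    unfolding u_weight_def[symmetric] v_weight_def[symmetric] by (simp only: diff_conv_add_uminus)
  then show ?thesis
    by (simp only: split add_diff_cancel_left' right_diff_distrib)
qed

lemma excess_nonneg:
  assumes u: "u \<in> H0 s1" and v: "v \<in> H0 s2"
  shows "mode_energy (u_weight k) (v_weight k) \<alpha> 0 (fourier u k - u_coeff k) (fourier v k - v_coeff k) \<ge> 0"
proof (cases "k = 0")
  case True
  then show ?thesis by (simp add: H0_fourier_0[OF u] H0_fourier_0[OF v] coeff_0 mode_energy_def)
next
  case False
  then show ?thesis using weights_pos[OF False] \<alpha>_pos by (intro mode_energy_nonneg) simp_all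
qed

lemma energy_min_le:
  assumes u: "u \<in> H0 s1" and v: "v \<in> H0 s2"
  shows "energy s1 s2 \<alpha> \<beta> g u_min v_min \<le> energy s1 s2 \<alpha> \<beta> g u v"
proof -
  have "0 \<le> 2 * tvol TYPE('d) * (energy s1 s2 \<alpha> \<beta> g u v - energy s1 s2 \<alpha> \<beta> g u_min v_min)"
    by (rule has_sum_nonneg[OF energy_excess_has_sum[OF u v] excess_nonneg[OF u v]])
  then show ?thesis using tvol_pos[where 'd='d] by (simp add: zero_le_mult_iff)
qed

lemma energy_min_unique:
  assumes u: "u \<in> H0 s1" and v: "v \<in> H0 s2"
    and le: "energy s1 s2 \<alpha> \<beta> g u v \<le> energy s1 s2 \<alpha> \<beta> g u_min v_min"
  shows "AE x in torus_measure. u x = u_min x \<and> v x = v_min x"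
proof -
  let ?q = "\<lambda>k. mode_energy (u_weight k) (v_weight k) \<alpha> 0 (fourier u k - u_coeff k) (fourier v k - v_coeff k)"
  have "infsum ?q UNIV \<le> 0"
    using infsumI[OF energy_excess_has_sum[OF u v]] le tvol_pos[where 'd='d]
    by (simp add: mult_nonneg_nonpos)
  then have "?q k = 0" for k
    by (rule nonneg_infsum_le_0D[OF _ has_sum_imp_summable[OF energy_excess_has_sum[OF u v]]])
       (use excess_nonneg[OF u v] in auto)
  then have "fourier u k = fourier u_min k \<and> fourier v k = fourier v_min k" for k
  proof (cases "k = 0")
    case False
    then show ?thesis
      using mode_energy_eq_0_imp[OF weights_pos(1,2)[OF False] less_imp_le[OF \<alpha>_pos] \<open>?q k = 0\<close>]
      by (simp add: u_min_spec v_min_spec)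
  qed (simp add: H0_fourier_0[OF u] H0_fourier_0[OF v] u_min_spec v_min_spec coeff_0)
  then show ?thesis
    using L2_fourier_eq_imp_AE_eq[OF H0_imp_L2[OF u] u_min_spec(1)] L2_fourier_eq_imp_AE_eq[OF H0_imp_L2[OF v] v_min_spec(1)]
    by (auto elim: eventually_mono[OF eventually_conj])
qed

lemma tint_v_min: "tint v_min = 0"
  by (simp add: fourier_0_eq_tint[symmetric] v_min_spec coeff_0)

lemma tint_u_min_shifted: "tint (\<lambda>x. (u_min x + tint g / of_real (tvol TYPE('d))) - g x) = 0"
proof -
  have "tint (\<lambda>x. (u_min x + tint g / of_real (tvol TYPE('d))) - g x)
      = tint u_min + of_real (tvol TYPE('d)) * (tint g / of_real (tvol TYPE('d))) - tint g"
    unfolding tint_def using L2_integrable[OF u_min_spec(1)] L2_integrable[OF L2_g]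
    by (simp add: measure_torus scaleR_conv_of_real)
  also have "\<dots> = 0"
    using tvol_pos[where 'd='d] by (simp add: fourier_0_eq_tint[symmetric] u_min_spec coeff_0)
  finally show ?thesis .
qed

end

theorem theorem7:
  fixes g :: "real^'d \<Rightarrow> complex" and s1 s2 \<alpha> \<beta> :: real
  assumes "s1 \<ge> 0" and "s2 \<le> 0" and "\<alpha> > 0" and "\<beta> > 0" and "L2 g"
  shows "\<exists>ut v. ut \<in> H0 s1 \<and> v \<in> H0 s2 \<and>
     (\<forall>u' v'. u' \<in> H0 s1 \<and> v' \<in> H0 s2 \<longrightarrow>
         energy s1 s2 \<alpha> \<beta> g ut v \<le> energy s1 s2 \<alpha> \<beta> g u' v') \<and>
     tint (\<lambda>x. (ut x + tint g / of_real (tvol TYPE('d))) - g x) = 0 \<and>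
     tint v = 0 \<and>
     (\<forall>u' v'. u' \<in> H0 s1 \<and> v' \<in> H0 s2 \<and>
         (\<forall>u'' v''. u'' \<in> H0 s1 \<and> v'' \<in> H0 s2 \<longrightarrow>
            energy s1 s2 \<alpha> \<beta> g u' v' \<le> energy s1 s2 \<alpha> \<beta> g u'' v'') \<longrightarrow>
         (AE x in torus_measure. u' x = ut x \<and> v' x = v x))"
proof -
  interpret uv_decomposition s1 s2 \<alpha> \<beta> g
    using assms(2-5) by unfold_locales
  show ?thesis
    using u_min_H0 v_min_H0 energy_min_le tint_u_min_shifted tint_v_min energy_min_unique by blast
qed

end
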